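(* Let $k\ge 1$. (a) There are infinitely many graphs $G$ (each with the property that any $k$ vertices lie in a common cycle) such that \[ crx_k(G)-rx_k(G)=\begin{cases}3,& k=1,\\ 2,& k=2,3,\\ 1,& k\ge 4.\end{cases} \] (b) For every $c\ge 1$, there exists a graph $G$ (with the property that any $k$ vertices lie in a common cycle) such that $rx_k(G)\le k^2-1$ and $crx_k(G)\ge c$. In particular, $crx_k(G)-rx_k(G)$ can be arbitrarily large.
   Context: An edge-coloured subgraph is rainbow if its edges have distinct colours. For a graph $G$ in which any $k$ vertices lie on a common cycle, $crx_k(G)$ is the minimum number of colours in an edge-colouring of $G$ such that every set of $k$ vertices lies in some rainbow cycle. For a connected graph $G$ on $n$ vertices and $2\le k\le n$, $rx_k(G)$ (the $k$-rainbow index) is the minimum number of colours in an edge-colouring of $G$ such that any $k$ vertices are contained in a rainbow tree; by convention $rx_1(G)=0$ for every graph $G$. *)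

theory Defs
  imports Main
begin

definition simple_graph :: "'a set \<Rightarrow> 'a set set \<Rightarrow> bool" where
  "simple_graph V E \<longleftrightarrow> finite V \<and> (\<forall>e\<in>E. \<exists>u v. u \<in> V \<and> v \<in> V \<and> u \<noteq> v \<and> e = {u, v})"

definition graph_connected :: "'a set \<Rightarrow> 'a set set \<Rightarrow> bool" where
  "graph_connected V E \<longleftrightarrow> V \<noteq> {} \<and> (\<forall>u\<in>V. \<forall>v\<in>V. (\<lambda>x y. {x, y} \<in> E)\<^sup>*\<^sup>* u v)"

definition cycle_edges :: "'a list \<Rightarrow> 'a set set" where
  "cycle_edges vs = {{vs ! i, vs ! ((i + 1) mod length vs)} | i. i < length vs}"

definition is_cycle :: "'a set set \<Rightarrow> 'a list \<Rightarrow> bool" where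
  "is_cycle E vs \<longleftrightarrow> length vs \<ge> 3 \<and> distinct vs \<and> cycle_edges vs \<subseteq> E"

definition is_tree_in :: "'a set \<Rightarrow> 'a set set \<Rightarrow> 'a set \<Rightarrow> 'a set set \<Rightarrow> bool" where
  "is_tree_in V E TV TE \<longleftrightarrow> TV \<subseteq> V \<and> TE \<subseteq> E \<and> (\<forall>e\<in>TE. e \<subseteq> TV)
     \<and> graph_connected TV TE \<and> \<not> (\<exists>vs. is_cycle TE vs)"

definition rainbow :: "('a set \<Rightarrow> nat) \<Rightarrow> 'a set set \<Rightarrow> bool" where
  "rainbow c F \<longleftrightarrow> inj_on c F"

definition colouring :: "'a set set \<Rightarrow> nat \<Rightarrow> ('a set \<Rightarrow> nat) \<Rightarrow> bool" where
  "colouring E m c \<longleftrightarrow> c ` E \<subseteq> {..<m}"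

definition k_cyclic :: "nat \<Rightarrow> 'a set \<Rightarrow> 'a set set \<Rightarrow> bool" where
  "k_cyclic k V E \<longleftrightarrow> (\<forall>S. S \<subseteq> V \<and> card S = k \<longrightarrow> (\<exists>vs. is_cycle E vs \<and> S \<subseteq> set vs))"

definition crx :: "nat \<Rightarrow> 'a set \<Rightarrow> 'a set set \<Rightarrow> nat" where
  "crx k V E = (LEAST m. \<exists>c. colouring E m c \<and>
      (\<forall>S. S \<subseteq> V \<and> card S = k \<longrightarrow>
         (\<exists>vs. is_cycle E vs \<and> S \<subseteq> set vs \<and> rainbow c (cycle_edges vs))))"

definition rx :: "nat \<Rightarrow> 'a set \<Rightarrow> 'a set set \<Rightarrow> nat" where
  "rx k V E = (if k = 1 then 0 else (LEAST m. \<exists>c. colouring E m c \<and>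
      (\<forall>S. S \<subseteq> V \<and> card S = k \<longrightarrow>
         (\<exists>TV TE. is_tree_in V E TV TE \<and> S \<subseteq> TV \<and> rainbow c TE))))"

end

theory Submission
  imports Defs "HOL-Library.FuncSet"
begin

text \<open>
  (a) For k = 1 the complete split graph with a clique of size two has crx 3: every vertex lies
  on a triangle through the clique edge, and three colours make all these triangles rainbow,
  while rx 1 = 0 by convention. For k = 2 the cocktail party graph has rx 2 = 2 (any two
  vertices are joined by a path of length at most two), but a cycle through a non-adjacent
  pair has length at least four, and four colours suffice. For k \<ge> 3 take the cycle C n:
  its only cycle is itself, so crx k = n; rainbow trees are subpaths, giving rx k = n - 1 for
  k \<ge> 4 and rx 3 = n - 2. The lower bounds on rx are pigeonhole arguments: if colours repeat
  too often, a rainbow tree must miss two edges of the cycle, and deleting two edges of a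
  cycle separates it.

  (b) In the complete split graph with a clique of size k, a star inside the clique together
  with one pendant edge per vertex outside gives rx k \<le> 2k - 1. If there are fewer than c
  colours and enough vertices outside the clique, k of them see the clique in the same
  colours; a cycle through them uses 2k edges into the clique but only k colours on them, so
  it is not rainbow, and crx k \<ge> c.
\<close>

section \<open>Connectivity, cycles and trees\<close>

abbreviation adjacent :: "'a set set \<Rightarrow> 'a \<Rightarrow> 'a \<Rightarrow> bool" where
  "adjacent E \<equiv> \<lambda>x y. {x, y} \<in> E"

lemma simple_graph_finite_edges:
  assumes "simple_graph V E" shows "finite E"
proof -
  have "E \<subseteq> Pow V"
  proof
    fix e assume "e \<in> E"
    then obtain u v where "u \<in> V" "v \<in> V" "e = {u, v}" using assms unfolding simple_graph_def by meson
    then show "e \<in> Pow V" by simp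
  qed
  moreover have "finite V" using assms unfolding simple_graph_def by simp
  ultimately show ?thesis by (meson finite_Pow_iff finite_subset)
qed

lemma adjacent_rtranclp_sym:
  assumes "(adjacent E)\<^sup>*\<^sup>* a b" shows "(adjacent E)\<^sup>*\<^sup>* b a"
  using assms
proof (induction rule: rtranclp_induct)
  case (step y z)
  then have "adjacent E z y" by (simp add: insert_commute)
  then show ?case using step.IH by (rule converse_rtranclp_into_rtranclp)
qed simp

lemma adjacent_rtranclp_chain:
  assumes "\<And>i. lo \<le> i \<Longrightarrow> i < hi \<Longrightarrow> {f i, f (Suc i)} \<in> E" "lo \<le> hi"
  shows "(adjacent E)\<^sup>*\<^sup>* (f lo) (f hi)"
  using assms(2)
proof (induction rule: dec_induct)
  case (step i)
  have "adjacent E (f i) (f (Suc i))" using assms(1)[OF step.hyps] .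
  with step.IH show ?case by (rule rtranclp.rtrancl_into_rtrancl)
qed simp

lemma adjacent_rtranclp_upt:
  assumes "\<And>i. lo \<le> i \<Longrightarrow> i < hi \<Longrightarrow> {i, Suc i} \<in> E" "lo \<le> hi"
  shows "(adjacent E)\<^sup>*\<^sup>* lo hi"
proof -
  have "{id i, id (Suc i)} \<in> E" if "lo \<le> i" "i < hi" for i using assms(1) that by simp
  from adjacent_rtranclp_chain[where f = id, OF this assms(2)] show ?thesis by simp
qed

lemma graph_connectedI_root:
  assumes "r \<in> V" "\<And>v. v \<in> V \<Longrightarrow> (adjacent E)\<^sup>*\<^sup>* v r"
  shows "graph_connected V E"
  unfolding graph_connected_def
proof (intro conjI ballI)
  fix u v assume "u \<in> V" "v \<in> V"
  then have "(adjacent E)\<^sup>*\<^sup>* u r" "(adjacent E)\<^sup>*\<^sup>* r v"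
    using assms(2) adjacent_rtranclp_sym[OF assms(2)] by simp_all
  then show "(adjacent E)\<^sup>*\<^sup>* u v" by (rule rtranclp_trans)
qed (use assms(1) in auto)

lemma graph_connected_upt:
  assumes "\<And>i. Suc i < n \<Longrightarrow> {i, Suc i} \<in> E" "0 < n"
  shows "graph_connected {..<n} E"
proof (rule graph_connectedI_root)
  fix v assume "v \<in> {..<n}"
  then have "(adjacent E)\<^sup>*\<^sup>* 0 v" using assms(1) by (intro adjacent_rtranclp_upt) auto
  then show "(adjacent E)\<^sup>*\<^sup>* v 0" by (rule adjacent_rtranclp_sym)
qed (use assms(2) in simp)

lemma exists_closer_neighbour:
  assumes "(adjacent E)\<^sup>*\<^sup>* r v" "v \<noteq> r"
  shows "\<exists>u. adjacent E u v \<and> (LEAST n. (adjacent E ^^ n) r u) < (LEAST n. (adjacent E ^^ n) r v)"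
proof -
  let ?d = "\<lambda>v. LEAST n. (adjacent E ^^ n) r v"
  obtain n where "(adjacent E ^^ n) r v" using assms(1) rtranclp_imp_relpowp by metis
  then have dv: "(adjacent E ^^ ?d v) r v" by (rule LeastI)
  have "?d v \<noteq> 0"
  proof
    assume "?d v = 0"
    then show False using dv assms(2) by simp
  qed
  then obtain p where p: "?d v = Suc p" using not0_implies_Suc by blast
  then have "(adjacent E ^^ Suc p) r v" using dv by simp
  then obtain u where "(adjacent E ^^ p) r u" "adjacent E u v" by (rule relpowp_Suc_E)
  moreover then have "?d u \<le> p" by (simp add: Least_le)
  ultimately show ?thesis using p by auto
qed

text \<open>Choosing for every vertex other than a root r a neighbour closer to r injects the
  non-root vertices into the edges.\<close>

lemma card_vertices_le_card_edges_Suc: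
  assumes "graph_connected V E" "finite E"
  shows "card V \<le> card E + 1"
proof (cases "finite V")
  case True
  obtain r where r: "r \<in> V" using assms(1) unfolding graph_connected_def by auto
  define d where "d v = (LEAST n. (adjacent E ^^ n) r v)" for v
  have "\<exists>u. adjacent E u v \<and> d u < d v" if "v \<in> V - {r}" for v
    unfolding d_def using assms(1) r that
    by (intro exists_closer_neighbour) (auto simp: graph_connected_def)
  then obtain pre where pre: "\<And>v. v \<in> V - {r} \<Longrightarrow> adjacent E (pre v) v \<and> d (pre v) < d v"
    by metis
  have "inj_on (\<lambda>v. {pre v, v}) (V - {r})"
  proof (rule inj_onI)
    fix v w assume v: "v \<in> V - {r}" and w: "w \<in> V - {r}" and eq: "{pre v, v} = {pre w, w}"
    show "v = w"
    proof (rule ccontr)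
      assume "v \<noteq> w"
      then have "v = pre w" "w = pre v" using eq by (auto simp: doubleton_eq_iff)
      then show False using pre[OF v] pre[OF w] by auto
    qed
  qed
  moreover have "(\<lambda>v. {pre v, v}) ` (V - {r}) \<subseteq> E" using pre by auto
  ultimately have "card (V - {r}) \<le> card E" using card_inj_on_le[OF _ _ assms(2)] by blast
  moreover have "card V = Suc (card (V - {r}))" using True r by (rule card_Suc_Diff1[symmetric])
  ultimately show ?thesis by simp
qed simp

definition cycle_edge :: "'a list \<Rightarrow> nat \<Rightarrow> 'a set" where
  "cycle_edge vs i = {vs ! i, vs ! ((i + 1) mod length vs)}"

lemma cycle_edges_eq_image: "cycle_edges vs = cycle_edge vs ` {..<length vs}"
  unfolding cycle_edges_def cycle_edge_def by auto

lemma finite_cycle_edges: "finite (cycle_edges vs)"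
  unfolding cycle_edges_eq_image by simp

lemma inj_on_cycle_edge:
  assumes "distinct vs" "3 \<le> length vs"
  shows "inj_on (cycle_edge vs) {..<length vs}"
proof (rule inj_onI)
  fix i j assume i: "i \<in> {..<length vs}" and j: "j \<in> {..<length vs}"
    and eq: "cycle_edge vs i = cycle_edge vs j"
  let ?L = "length vs"
  have "0 < ?L" using assms(2) by linarith
  then have succ: "(i + 1) mod ?L < ?L" "(j + 1) mod ?L < ?L" by simp_all
  have nth_inj: "vs ! a = vs ! b \<longleftrightarrow> a = b" if "a < ?L" "b < ?L" for a b
    using nth_eq_iff_index_eq[OF assms(1) that] .
  from eq consider "vs ! i = vs ! j" | "vs ! i = vs ! ((j + 1) mod ?L)" "vs ! ((i + 1) mod ?L) = vs ! j"
    unfolding cycle_edge_def by (auto simp: doubleton_eq_iff)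
  then show "i = j"
  proof cases
    case 1
    then show ?thesis using i j nth_inj by simp
  next
    case 2
    then have "i = (j + 1) mod ?L" "(i + 1) mod ?L = j" using i j succ nth_inj by simp_all
    then show ?thesis using i j assms(2) by (auto simp: mod_if split: if_splits)
  qed
qed

lemma card_cycle_edges:
  assumes "is_cycle E vs" shows "card (cycle_edges vs) = length vs"
  using assms inj_on_cycle_edge[of vs] unfolding is_cycle_def cycle_edges_eq_image
  by (simp add: card_image)

lemma first_cycle_edge:
  assumes "is_cycle E vs" shows "{vs ! 0, vs ! 1} \<in> cycle_edges vs"
proof -
  have L: "0 < length vs" "1 < length vs" using assms unfolding is_cycle_def by linarith+
  then have "cycle_edge vs 0 \<in> cycle_edges vs" unfolding cycle_edges_eq_image by simp
  moreover have "cycle_edge vs 0 = {vs ! 0, vs ! 1}" unfolding cycle_edge_def using L(2) by simp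
  ultimately show ?thesis by simp
qed

lemma is_cycleI:
  assumes "3 \<le> length vs" "distinct vs"
    and "\<And>i. i < length vs \<Longrightarrow> {vs ! i, vs ! ((i + 1) mod length vs)} \<in> E"
  shows "is_cycle E vs"
  using assms unfolding is_cycle_def cycle_edges_def by blast

lemma cycle_edges_triangle: "cycle_edges [a, b, c] = {{a, b}, {b, c}, {c, a}}"
proof -
  have "{..<length [a, b, c]} = {0, 1, 2}" by (auto simp: numeral_2_eq_2 less_Suc_eq)
  then show ?thesis unfolding cycle_edges_eq_image cycle_edge_def by simp
qed

lemma cycle_edges_square: "cycle_edges [a, b, c, d] = {{a, b}, {b, c}, {c, d}, {d, a}}"
proof -
  have "{..<length [a, b, c, d]} = {0, 1, 2, 3}"
    by (auto simp: numeral_3_eq_3 numeral_2_eq_2 less_Suc_eq)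
  then show ?thesis unfolding cycle_edges_eq_image cycle_edge_def by simp
qed

lemma triangle_vertices_adjacent:
  assumes "is_cycle E vs" "length vs = 3" "x \<in> set vs" "y \<in> set vs" "x \<noteq> y"
  shows "{x, y} \<in> E"
proof -
  obtain a b c where abc: "vs = [a, b, c]" using assms(2) by (auto simp: length_Suc_conv numeral_3_eq_3)
  then have "{{a, b}, {b, c}, {c, a}} \<subseteq> E"
    using assms(1) cycle_edges_triangle unfolding is_cycle_def by metis
  then show ?thesis using assms(3-5) abc by (auto simp: insert_commute)
qed

lemma cycle_two_neighbours:
  assumes "is_cycle E vs" "x \<in> set vs"
  obtains p q where "p \<noteq> q" "{x, p} \<in> cycle_edges vs" "{x, q} \<in> cycle_edges vs"
proof -
  let ?L = "length vs"
  have L: "3 \<le> ?L" "distinct vs" using assms(1) unfolding is_cycle_def by auto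
  obtain i where i: "i < ?L" "vs ! i = x" using assms(2) by (auto simp: in_set_conv_nth)
  define h where "h = (if i = 0 then ?L - 1 else i - 1)"
  have h: "h < ?L" "(h + 1) mod ?L = i" unfolding h_def using i(1) L(1) by auto
  have "h \<noteq> (i + 1) mod ?L" unfolding h_def using i(1) L(1) by (auto simp: mod_if)
  moreover have "(i + 1) mod ?L < ?L" using i(1) by (intro mod_less_divisor) linarith
  ultimately have "vs ! h \<noteq> vs ! ((i + 1) mod ?L)" using h(1) nth_eq_iff_index_eq[OF L(2)] by blast
  moreover have "cycle_edge vs h \<in> cycle_edges vs" "cycle_edge vs i \<in> cycle_edges vs"
    unfolding cycle_edges_eq_image using h(1) i(1) by simp_all
  ultimately show ?thesis using that h(2) i(2) unfolding cycle_edge_def by (metis insert_commute)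
qed

lemma cycle_path_around:
  assumes "is_cycle E vs"
  shows "(adjacent (cycle_edges vs - {{vs ! 0, vs ! 1}}))\<^sup>*\<^sup>* (vs ! 1) (vs ! 0)"
proof -
  let ?L = "length vs" and ?E = "cycle_edges vs - {{vs ! 0, vs ! 1}}"
  have L: "3 \<le> ?L" "distinct vs" using assms unfolding is_cycle_def by auto
  then have L0: "0 < ?L" by linarith
  have step: "{vs ! i, vs ! ((i + 1) mod ?L)} \<in> ?E" if "0 < i" "i < ?L" for i
  proof -
    have "cycle_edge vs i \<in> cycle_edges vs" unfolding cycle_edges_eq_image using that by simp
    moreover have "{vs ! i, vs ! ((i + 1) mod ?L)} \<noteq> {vs ! 0, vs ! 1}"
    proof
      have "vs ! i \<noteq> vs ! 0" using that L0 nth_eq_iff_index_eq[OF L(2), of i 0] by simp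
      moreover assume "{vs ! i, vs ! ((i + 1) mod ?L)} = {vs ! 0, vs ! 1}"
      ultimately have "vs ! i = vs ! 1" "vs ! ((i + 1) mod ?L) = vs ! 0"
        by (auto simp: doubleton_eq_iff)
      then have "i = 1" "(i + 1) mod ?L = 0"
        using that L0 L(1) nth_eq_iff_index_eq[OF L(2), of i 1]
          nth_eq_iff_index_eq[OF L(2), of "(i + 1) mod ?L" 0]
        by simp_all
      then show False using L(1) by simp
    qed
    ultimately show ?thesis unfolding cycle_edge_def by simp
  qed
  have "(adjacent ?E)\<^sup>*\<^sup>* (vs ! 1) (vs ! (?L - 1))"
  proof (rule adjacent_rtranclp_chain[where f = "(!) vs"])
    fix i assume i: "1 \<le> i" "i < ?L - 1"
    then have "(i + 1) mod ?L = Suc i" by simp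
    then show "{vs ! i, vs ! Suc i} \<in> ?E" using step[of i] i by simp
  qed (use L(1) in simp)
  moreover have "adjacent ?E (vs ! (?L - 1)) (vs ! 0)"
  proof -
    have last: "0 < ?L - 1" "?L - 1 < ?L" using L(1) by linarith+
    have "?L - 1 + 1 = ?L" using L(1) by linarith
    then have "(?L - 1 + 1) mod ?L = 0" by (metis mod_self)
    then show ?thesis using step[OF last] by simp
  qed
  ultimately show ?thesis by (rule rtranclp.rtrancl_into_rtrancl)
qed

lemma graph_connected_minus_cycle_edge:
  assumes "graph_connected V E" "is_cycle E vs"
  shows "graph_connected V (E - {{vs ! 0, vs ! 1}})"
proof -
  let ?e = "{vs ! 0, vs ! 1}"
  have "adjacent (cycle_edges vs - {?e}) \<le> adjacent (E - {?e})"
    using assms(2) unfolding is_cycle_def by auto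
  from rtranclp_mono[OF this] cycle_path_around[OF assms(2)]
  have around: "(adjacent (E - {?e}))\<^sup>*\<^sup>* (vs ! 1) (vs ! 0)" by (rule predicate2D)
  have edge: "(adjacent (E - {?e}))\<^sup>*\<^sup>* y z" if "adjacent E y z" for y z
  proof (cases "{y, z} = ?e")
    case True
    then consider "y = vs ! 0" "z = vs ! 1" | "y = vs ! 1" "z = vs ! 0" by (auto simp: doubleton_eq_iff)
    then show ?thesis using around adjacent_rtranclp_sym[OF around] by cases simp_all
  qed (use that in auto)
  then have "(adjacent E)\<^sup>*\<^sup>* = (adjacent (E - {?e}))\<^sup>*\<^sup>*"
    by (intro rtranclp_subset) auto
  then show ?thesis using assms(1) unfolding graph_connected_def by simp
qed

lemma no_cycle_if_card_edges_lt:
  assumes "graph_connected V E" "finite E" "card E < card V"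
  shows "\<not> is_cycle E vs"
proof
  assume cyc: "is_cycle E vs"
  let ?e = "{vs ! 0, vs ! 1}"
  have "?e \<in> E" using first_cycle_edge[OF cyc] cyc unfolding is_cycle_def by auto
  then have "card E = Suc (card (E - {?e}))" using card_Suc_Diff1[OF assms(2)] by simp
  moreover have "card V \<le> card (E - {?e}) + 1"
    using card_vertices_le_card_edges_Suc graph_connected_minus_cycle_edge[OF assms(1) cyc] assms(2)
    by blast
  ultimately show False using assms(3) by simp
qed

lemma is_tree_inI:
  assumes "TV \<subseteq> V" "TE \<subseteq> E" "\<forall>e\<in>TE. e \<subseteq> TV" "graph_connected TV TE" "finite TE"
    "card TE < card TV"
  shows "is_tree_in V E TV TE"
  using assms no_cycle_if_card_edges_lt unfolding is_tree_in_def by blast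

lemma is_tree_in_edge:
  assumes "{u, w} \<in> E" "u \<in> V" "w \<in> V" "u \<noteq> w"
  shows "is_tree_in V E {u, w} {{u, w}}"
proof (rule is_tree_inI)
  show "graph_connected {u, w} {{u, w}}"
    by (rule graph_connectedI_root[of u]) (auto simp: insert_commute)
qed (use assms in auto)

lemma is_tree_in_path3:
  assumes "{a, b} \<in> E" "{b, c} \<in> E" "{a, b, c} \<subseteq> V" "distinct [a, b, c]"
  shows "is_tree_in V E {a, b, c} {{a, b}, {b, c}}"
proof (rule is_tree_inI)
  show "graph_connected {a, b, c} {{a, b}, {b, c}}"
    by (rule graph_connectedI_root[of b]) (auto simp: insert_commute)
  show "card {{a, b}, {b, c}} < card {a, b, c}"
    using assms(4) by (auto simp: card_insert_if doubleton_eq_iff)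
qed (use assms in auto)

definition k_cyclic_graph :: "nat \<Rightarrow> 'a set \<Rightarrow> 'a set set \<Rightarrow> bool" where
  "k_cyclic_graph k V E \<longleftrightarrow> simple_graph V E \<and> graph_connected V E \<and> k_cyclic k V E \<and> k \<le> card V"

section \<open>Rainbow colourings\<close>

definition rainbow_cycle_colouring :: "nat \<Rightarrow> 'a set \<Rightarrow> 'a set set \<Rightarrow> ('a set \<Rightarrow> nat) \<Rightarrow> bool" where
  "rainbow_cycle_colouring k V E c \<longleftrightarrow>
     (\<forall>S. S \<subseteq> V \<and> card S = k \<longrightarrow> (\<exists>vs. is_cycle E vs \<and> S \<subseteq> set vs \<and> rainbow c (cycle_edges vs)))"

definition rainbow_tree_colouring :: "nat \<Rightarrow> 'a set \<Rightarrow> 'a set set \<Rightarrow> ('a set \<Rightarrow> nat) \<Rightarrow> bool" where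
  "rainbow_tree_colouring k V E c \<longleftrightarrow>
     (\<forall>S. S \<subseteq> V \<and> card S = k \<longrightarrow> (\<exists>TV TE. is_tree_in V E TV TE \<and> S \<subseteq> TV \<and> rainbow c TE))"

lemma crx_eq_Least: "crx k V E = (LEAST m. \<exists>c. colouring E m c \<and> rainbow_cycle_colouring k V E c)"
  unfolding crx_def rainbow_cycle_colouring_def ..

lemma rx_eq_Least:
  "k \<noteq> 1 \<Longrightarrow> rx k V E = (LEAST m. \<exists>c. colouring E m c \<and> rainbow_tree_colouring k V E c)"
  unfolding rx_def rainbow_tree_colouring_def by simp

lemma rainbow_card_le:
  assumes "rainbow c F" "colouring E m c" "F \<subseteq> E" shows "card F \<le> m"
proof -
  have "c ` F \<subseteq> {..<m}" using assms(2,3) unfolding colouring_def by blast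
  then show ?thesis using assms(1) card_inj_on_le[of c F "{..<m}"] unfolding rainbow_def by simp
qed

lemma k_cyclic_if_rainbow_cycle_colouring:
  "rainbow_cycle_colouring k V E c \<Longrightarrow> k_cyclic k V E"
  unfolding rainbow_cycle_colouring_def k_cyclic_def by blast

lemma exists_injective_rainbow_cycle_colouring:
  assumes "finite E" "k_cyclic k V E"
  shows "\<exists>c. colouring E (card E) c \<and> rainbow_cycle_colouring k V E c"
proof -
  obtain h where h: "bij_betw h E {0..<card E}" using ex_bij_betw_finite_nat[OF assms(1)] ..
  then have "colouring E (card E) h" unfolding colouring_def bij_betw_def by auto
  moreover have "rainbow_cycle_colouring k V E h"
    unfolding rainbow_cycle_colouring_def rainbow_def
  proof (intro allI impI)
    fix S assume "S \<subseteq> V \<and> card S = k"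
    then obtain vs where "is_cycle E vs" "S \<subseteq> set vs" using assms(2) unfolding k_cyclic_def by blast
    moreover then have "inj_on h (cycle_edges vs)"
      using h inj_on_subset unfolding bij_betw_def is_cycle_def by blast
    ultimately show "\<exists>vs. is_cycle E vs \<and> S \<subseteq> set vs \<and> inj_on h (cycle_edges vs)" by blast
  qed
  ultimately show ?thesis by blast
qed

lemma crx_le:
  "colouring E m c \<Longrightarrow> rainbow_cycle_colouring k V E c \<Longrightarrow> crx k V E \<le> m"
  unfolding crx_eq_Least by (blast intro: Least_le)

lemma crx_le_card_edges: "finite E \<Longrightarrow> k_cyclic k V E \<Longrightarrow> crx k V E \<le> card E"
  using exists_injective_rainbow_cycle_colouring crx_le by blast

lemma le_crx:
  assumes "finite E" "k_cyclic k V E"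
    and "\<And>m c. colouring E m c \<Longrightarrow> rainbow_cycle_colouring k V E c \<Longrightarrow> b \<le> m"
  shows "b \<le> crx k V E"
  unfolding crx_eq_Least
  using exists_injective_rainbow_cycle_colouring[OF assms(1,2)] by (blast intro: LeastI2_ex assms(3))

lemma le_crx_if_cycles_long:
  assumes "finite E" "k_cyclic k V E" "S \<subseteq> V" "card S = k"
    and "\<And>vs. is_cycle E vs \<Longrightarrow> S \<subseteq> set vs \<Longrightarrow> L \<le> length vs"
  shows "L \<le> crx k V E"
proof (rule le_crx[OF assms(1,2)])
  fix m c assume c: "colouring E m c" "rainbow_cycle_colouring k V E c"
  then obtain vs where vs: "is_cycle E vs" "S \<subseteq> set vs" "rainbow c (cycle_edges vs)"
    using assms(3,4) unfolding rainbow_cycle_colouring_def by blast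
  have "card (cycle_edges vs) \<le> m"
    using rainbow_card_le[OF vs(3) c(1)] vs(1) unfolding is_cycle_def by simp
  then show "L \<le> m" using assms(5)[OF vs(1,2)] card_cycle_edges[OF vs(1)] by simp
qed

lemma rx_le:
  assumes "colouring E m c" "rainbow_tree_colouring k V E c" shows "rx k V E \<le> m"
proof (cases "k = 1")
  case False
  then show ?thesis unfolding rx_eq_Least[OF False] using assms by (blast intro: Least_le)
qed (simp add: rx_def)

lemma le_rx:
  assumes "k \<noteq> 1" "colouring E m c" "rainbow_tree_colouring k V E c"
    and "\<And>m c. colouring E m c \<Longrightarrow> rainbow_tree_colouring k V E c \<Longrightarrow> b \<le> m"
  shows "b \<le> rx k V E"
  unfolding rx_eq_Least[OF assms(1)] using assms(2,3) by (blast intro: LeastI2_ex assms(4))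

lemma spanning_tree_rainbow_colouring:
  assumes "is_tree_in V E V T" "finite T" "T \<noteq> {}"
  shows "\<exists>c. colouring E (card T) c \<and> rainbow_tree_colouring k V E c"
proof -
  obtain h where h: "bij_betw h T {0..<card T}" using ex_bij_betw_finite_nat[OF assms(2)] ..
  define c where "c e = (if e \<in> T then h e else 0)" for e
  have "0 < card T" using assms(2,3) by (simp add: card_gt_0_iff)
  then have "colouring E (card T) c" using h unfolding colouring_def c_def bij_betw_def by auto
  moreover have "rainbow c T" using h unfolding rainbow_def bij_betw_def inj_on_def c_def by simp
  then have "rainbow_tree_colouring k V E c"
    using assms(1) unfolding rainbow_tree_colouring_def by blast
  ultimately show ?thesis by blast
qed

lemma simple_graph_edgeD:
  assumes "simple_graph V E" "{x, y} \<in> E"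
  shows "x \<noteq> y" "x \<in> V" "y \<in> V"
proof -
  obtain a b where "a \<in> V" "b \<in> V" "a \<noteq> b" "{x, y} = {a, b}"
    using assms unfolding simple_graph_def by meson
  then show "x \<noteq> y" "x \<in> V" "y \<in> V" by (auto simp: doubleton_eq_iff)
qed

lemma two_le_colours_if_nonadjacent:
  assumes "simple_graph V E" "u \<in> V" "v \<in> V" "u \<noteq> v" "{u, v} \<notin> E"
    and "colouring E m c" "rainbow_tree_colouring 2 V E c"
  shows "2 \<le> m"
proof -
  have "{u, v} \<subseteq> V" "card {u, v} = 2" using assms(2-4) by simp_all
  then obtain TV TE where T: "is_tree_in V E TV TE" "{u, v} \<subseteq> TV" "rainbow c TE"
    using assms(7) unfolding rainbow_tree_colouring_def by blast
  have TE: "TE \<subseteq> E" "\<forall>e\<in>TE. e \<subseteq> TV" "graph_connected TV TE" "TV \<subseteq> V"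
    using T(1) unfolding is_tree_in_def by auto
  have "(adjacent TE)\<^sup>*\<^sup>* u v" using TE(3) T(2) unfolding graph_connected_def by simp
  then obtain y where y: "{u, y} \<in> TE" using assms(4) by (cases rule: converse_rtranclpE) auto
  then have "y \<noteq> u" "y \<noteq> v" using simple_graph_edgeD(1)[OF assms(1)] TE(1) assms(5) by auto
  moreover have "y \<in> TV" using y TE(2) by auto
  moreover have "finite TV" using TE(4) assms(1) finite_subset unfolding simple_graph_def by blast
  ultimately have "3 \<le> card TV" using T(2) assms(4) card_mono[of TV "{u, v, y}"] by simp
  moreover have "finite TE" using TE(1) simple_graph_finite_edges[OF assms(1)] finite_subset by blast
  then have "card TV \<le> card TE + 1" using card_vertices_le_card_edges_Suc TE(3) by blast
  moreover have "card TE \<le> m" using rainbow_card_le[OF T(3) assms(6) TE(1)] .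
  ultimately show ?thesis by simp
qed

lemma card_le_card_colours_plus_missing:
  assumes "finite H" "inj_on f H" "rainbow c TE"
  shows "card H \<le> card ((c \<circ> f) ` H) + card {i \<in> H. f i \<notin> TE}"
proof -
  let ?H1 = "{i \<in> H. f i \<in> TE}"
  have "inj_on (c \<circ> f) ?H1"
  proof (rule comp_inj_on)
    show "inj_on f ?H1" using assms(2) by (rule inj_on_subset) auto
    show "inj_on c (f ` ?H1)" using assms(3) unfolding rainbow_def by (rule inj_on_subset) auto
  qed
  then have "card ?H1 = card ((c \<circ> f) ` ?H1)" by (rule card_image[symmetric])
  also have "\<dots> \<le> card ((c \<circ> f) ` H)" using assms(1) by (intro card_mono) auto
  finally have "card ?H1 \<le> card ((c \<circ> f) ` H)" .
  moreover have "H = ?H1 \<union> {i \<in> H. f i \<notin> TE}" by auto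
  then have "card H \<le> card ?H1 + card {i \<in> H. f i \<notin> TE}" by (metis card_Un_le)
  ultimately show ?thesis by simp
qed

lemma exists_small_subset_with_repeats:
  assumes "finite A" "card (g ` A) + d \<le> card A"
  shows "\<exists>H \<subseteq> A. card H \<le> 2 * d \<and> card (g ` H) + d \<le> card H"
  using assms
proof (induction d arbitrary: A)
  case 0
  then show ?case by (intro exI[of _ "{}"]) simp
next
  case (Suc d)
  have "\<not> inj_on g A" using Suc.prems card_image by fastforce
  then obtain a1 a2 where a: "a1 \<in> A" "a2 \<in> A" "a1 \<noteq> a2" "g a1 = g a2" unfolding inj_on_def by blast
  have "g ` (A - {a1}) = g ` A" using a by blast
  moreover have "card (A - {a1}) = card A - 1" using a(1) Suc.prems(1) by simp
  ultimately have "card (g ` (A - {a1})) + d \<le> card (A - {a1})" using Suc.prems(2) by simp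
  then obtain H' where H': "H' \<subseteq> A - {a1}" "card H' \<le> 2 * d" "card (g ` H') + d \<le> card H'"
    using Suc.IH[of "A - {a1}"] Suc.prems(1) by blast
  define H where "H = insert a1 (insert a2 H')"
  have fin: "finite H'" using H'(1) Suc.prems(1) finite_subset by blast
  have "a1 \<notin> H'" using H'(1) by blast
  have "g ` H = insert (g a2) (g ` H')" unfolding H_def using a(4) by auto
  then have "card (g ` H) \<le> card (g ` H') + (if a2 \<in> H' then 0 else 1)"
    using fin by (auto simp: card_insert_if)
  moreover have "card H = card H' + (if a2 \<in> H' then 1 else 2)"
    unfolding H_def using fin \<open>a1 \<notin> H'\<close> a(3) by (auto simp: card_insert_if)
  moreover have "H \<subseteq> A" unfolding H_def using H'(1) a(1,2) by blast
  ultimately show ?case using H' by (intro exI[of _ H]) auto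
qed

lemma card_image_repeats_mono:
  assumes "finite B" "H \<subseteq> B" "card (g ` H) + d \<le> card H"
  shows "card (g ` B) + d \<le> card B"
proof -
  have fin: "finite H" using assms(1,2) finite_subset by blast
  have "g ` B = g ` H \<union> g ` (B - H)" using assms(2) by blast
  then have "card (g ` B) \<le> card (g ` H) + card (g ` (B - H))" by (simp add: card_Un_le)
  also have "\<dots> \<le> card (g ` H) + card (B - H)" using assms(1) by (simp add: card_image_le)
  finally have "card (g ` B) \<le> card (g ` H) + card (B - H)" .
  moreover have "card B = card H + card (B - H)"
    using assms(1,2) fin card_mono[OF assms(1,2)] by (simp add: card_Diff_subset)
  ultimately show ?thesis using assms(3) by simp
qed

lemma exists_subset_with_repeats:
  assumes "finite A" "card (g ` A) + d \<le> card A" "2 * d \<le> card A"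
  obtains H where "H \<subseteq> A" "card H = 2 * d" "card (g ` H) + d \<le> card H"
proof -
  obtain H0 where H0: "H0 \<subseteq> A" "card H0 \<le> 2 * d" "card (g ` H0) + d \<le> card H0"
    using exists_small_subset_with_repeats[OF assms(1,2)] by blast
  then obtain H where H: "H0 \<subseteq> H" "H \<subseteq> A" "card H = 2 * d"
    using exists_subset_between[OF H0(2) assms(3) H0(1) assms(1)] by blast
  moreover have "card (g ` H) + d \<le> card H"
    using card_image_repeats_mono[OF _ H(1) H0(3)] H(2) assms(1) finite_subset by blast
  ultimately show ?thesis using that by blast
qed

section \<open>The cycle graph\<close>

definition cycle_graph :: "nat \<Rightarrow> nat set set" where
  "cycle_graph n = cycle_edges [0..<n]"

definition cycle_graph_edge :: "nat \<Rightarrow> nat \<Rightarrow> nat set" where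
  "cycle_graph_edge n i = {i, Suc i mod n}"

lemma cycle_graph_eq_image: "cycle_graph n = cycle_graph_edge n ` {..<n}"
proof -
  have "cycle_edge [0..<n] i = cycle_graph_edge n i" if "i < n" for i
    using that unfolding cycle_edge_def cycle_graph_edge_def by simp
  then show ?thesis unfolding cycle_graph_def cycle_edges_eq_image by (intro image_cong) auto
qed

lemma cycle_graph_edge_less: "Suc i < n \<Longrightarrow> cycle_graph_edge n i = {i, Suc i}"
  unfolding cycle_graph_edge_def by simp

lemma cycle_graph_edge_last: "Suc i = n \<Longrightarrow> cycle_graph_edge n i = {i, 0}"
  unfolding cycle_graph_edge_def by simp

lemma cycle_graph_edge_in: "i < n \<Longrightarrow> cycle_graph_edge n i \<in> cycle_graph n"
  unfolding cycle_graph_eq_image by simp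

lemma is_cycle_cycle_graph: "3 \<le> n \<Longrightarrow> is_cycle (cycle_graph n) [0..<n]"
  unfolding is_cycle_def cycle_graph_def by simp

lemma inj_on_cycle_graph_edge:
  assumes "3 \<le> n" shows "inj_on (cycle_graph_edge n) {..<n}"
proof -
  have "inj_on (cycle_edge [0..<n]) {..<n}" using inj_on_cycle_edge[of "[0..<n]"] assms by simp
  moreover have "cycle_edge [0..<n] i = cycle_graph_edge n i" if "i < n" for i
    using that unfolding cycle_edge_def cycle_graph_edge_def by simp
  ultimately show ?thesis by (simp add: inj_on_def)
qed

lemma card_cycle_graph: "3 \<le> n \<Longrightarrow> card (cycle_graph n) = n"
  using card_cycle_edges[OF is_cycle_cycle_graph] unfolding cycle_graph_def by simp

lemma simple_graph_cycle_graph: "3 \<le> n \<Longrightarrow> simple_graph {..<n} (cycle_graph n)"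
  unfolding simple_graph_def cycle_graph_eq_image
proof (intro conjI ballI)
  fix e assume n: "3 \<le> n" and "e \<in> cycle_graph_edge n ` {..<n}"
  then obtain i where i: "i < n" "e = cycle_graph_edge n i" by auto
  moreover have "Suc i mod n < n" "i \<noteq> Suc i mod n" using i(1) n by (auto simp: mod_if)
  ultimately show "\<exists>u v. u \<in> {..<n} \<and> v \<in> {..<n} \<and> u \<noteq> v \<and> e = {u, v}"
    unfolding cycle_graph_edge_def by blast
qed simp

lemma graph_connected_cycle_graph:
  assumes "3 \<le> n" shows "graph_connected {..<n} (cycle_graph n)"
proof (rule graph_connected_upt)
  fix i assume "Suc i < n"
  then show "{i, Suc i} \<in> cycle_graph n" using cycle_graph_edge_in[of i n] cycle_graph_edge_less by simp
qed (use assms in simp)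

lemma k_cyclic_cycle_graph: "3 \<le> n \<Longrightarrow> k_cyclic k {..<n} (cycle_graph n)"
  unfolding k_cyclic_def using is_cycle_cycle_graph by force

lemma cycle_graph_path_stays_in_arc:
  assumes "TE \<subseteq> cycle_graph n" "a < b" "b < n"
    and "cycle_graph_edge n a \<notin> TE" "cycle_graph_edge n b \<notin> TE"
    and "(adjacent TE)\<^sup>*\<^sup>* s t" "s \<in> {a<..b}"
  shows "t \<in> {a<..b}"
  using assms(6,7)
proof (induction rule: rtranclp_induct)
  case (step y z)
  obtain i where i: "i < n" "{y, z} = cycle_graph_edge n i"
    using step.hyps(2) assms(1) unfolding cycle_graph_eq_image by auto
  have "i \<noteq> a" "i \<noteq> b" using i(2) step.hyps(2) assms(4,5) by auto
  show ?case
  proof (cases "Suc i < n")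
    case True
    then have "{y, z} = {i, Suc i}" using i(2) cycle_graph_edge_less by simp
    then show ?thesis using step.IH step.prems \<open>i \<noteq> a\<close> \<open>i \<noteq> b\<close> by (auto simp: doubleton_eq_iff)
  next
    case False
    then have "Suc i = n" using i(1) by simp
    then have "{y, z} = {i, 0}" using i(2) cycle_graph_edge_last by simp
    then show ?thesis using step.IH step.prems \<open>Suc i = n\<close> \<open>i \<noteq> b\<close> assms(3)
      by (auto simp: doubleton_eq_iff)
  qed
qed simp

lemma cycle_graph_gaps_separate:
  assumes "TE \<subseteq> cycle_graph n" "a < b" "b < n"
    and "cycle_graph_edge n a \<notin> TE" "cycle_graph_edge n b \<notin> TE"
    and "s \<notin> {a<..b}" "t \<in> {a<..b}"
  shows "\<not> (adjacent TE)\<^sup>*\<^sup>* s t"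
proof
  assume "(adjacent TE)\<^sup>*\<^sup>* s t"
  then have "(adjacent TE)\<^sup>*\<^sup>* t s" by (rule adjacent_rtranclp_sym)
  from cycle_graph_path_stays_in_arc[OF assms(1-5) this assms(7)] assms(6) show False by simp
qed

lemma cycle_graph_connected_subgraph_gap_unique:
  assumes "TE \<subseteq> cycle_graph n" "graph_connected TV TE" "x \<in> TV" "y \<in> TV" "x < n" "y < n"
    and "cycle_graph_edge n x \<notin> TE" "cycle_graph_edge n y \<notin> TE"
  shows "x = y"
proof (rule ccontr)
  have conn: "(adjacent TE)\<^sup>*\<^sup>* x y" "(adjacent TE)\<^sup>*\<^sup>* y x"
    using assms(2-4) unfolding graph_connected_def by simp_all
  assume "x \<noteq> y"
  then consider "x < y" | "y < x" by linarith
  then show False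
  proof cases
    case 1
    then show False using cycle_graph_gaps_separate[OF assms(1) 1 assms(6,7,8), of x y] conn by simp
  next
    case 2
    then show False using cycle_graph_gaps_separate[OF assms(1) 2 assms(5,8,7), of y x] conn by simp
  qed
qed

text \<open>Deleting one edge of a cycle in the cycle graph leaves its two ends connected, but the
  cycle graph with two edges deleted separates them; so the cycle uses every edge.\<close>

lemma cycle_in_cycle_graph_is_spanning:
  assumes "is_cycle (cycle_graph n) vs"
  shows "cycle_edges vs = cycle_graph n"
proof (rule ccontr)
  have sub: "cycle_edges vs \<subseteq> cycle_graph n" using assms unfolding is_cycle_def by simp
  assume "cycle_edges vs \<noteq> cycle_graph n"
  then obtain a where a: "a < n" "cycle_graph_edge n a \<notin> cycle_edges vs"
    using sub unfolding cycle_graph_eq_image by blast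
  let ?e = "{vs ! 0, vs ! 1}"
  have e: "?e \<in> cycle_edges vs" by (rule first_cycle_edge[OF assms])
  then obtain b where b: "b < n" "?e = cycle_graph_edge n b"
    using sub unfolding cycle_graph_eq_image by auto
  let ?TE = "cycle_edges vs - {?e}"
  have TE: "?TE \<subseteq> cycle_graph n" "cycle_graph_edge n a \<notin> ?TE" "cycle_graph_edge n b \<notin> ?TE"
    using sub a(2) b(2) by auto
  have "a \<noteq> b" using a(2) b(2) e by auto
  have around: "(adjacent ?TE)\<^sup>*\<^sup>* (vs ! 1) (vs ! 0)" by (rule cycle_path_around[OF assms])
  have "{vs ! 0, vs ! 1} = {b, Suc b mod n}" using b(2) unfolding cycle_graph_edge_def .
  then have ends: "(adjacent ?TE)\<^sup>*\<^sup>* b (Suc b mod n)" "(adjacent ?TE)\<^sup>*\<^sup>* (Suc b mod n) b"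
    using around adjacent_rtranclp_sym[OF around] by (auto simp: doubleton_eq_iff)
  consider "a < b" | "b < a" using \<open>a \<noteq> b\<close> by linarith
  then show False
  proof cases
    case 1
    have "Suc b mod n \<notin> {a<..b}" using b(1) by (auto simp: mod_if)
    then show False using cycle_graph_gaps_separate[OF TE(1) 1 b(1) TE(2,3), of "Suc b mod n" b]
      ends 1 by simp
  next
    case 2
    have "Suc b mod n = Suc b" using 2 a(1) by simp
    then show False using cycle_graph_gaps_separate[OF TE(1) 2 a(1) TE(3,2), of b "Suc b mod n"]
      ends 2 by simp
  qed
qed

lemma crx_cycle_graph:
  assumes "3 \<le> n" "k \<le> n"
  shows "crx k {..<n} (cycle_graph n) = n"
proof (rule antisym)
  have fin: "finite (cycle_graph n)" unfolding cycle_graph_def by (rule finite_cycle_edges)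
  show "crx k {..<n} (cycle_graph n) \<le> n"
    using crx_le_card_edges[OF fin k_cyclic_cycle_graph[OF assms(1)]] card_cycle_graph[OF assms(1)]
    by simp
  obtain S where S: "S \<subseteq> {..<n}" "card S = k" using obtain_subset_with_card_n[of k "{..<n}"] assms(2)
    by auto
  show "n \<le> crx k {..<n} (cycle_graph n)"
  proof (rule le_crx_if_cycles_long[OF fin k_cyclic_cycle_graph[OF assms(1)] S])
    fix vs assume cyc: "is_cycle (cycle_graph n) vs"
    have "card (cycle_edges vs) = n"
      using cycle_in_cycle_graph_is_spanning[OF cyc] card_cycle_graph[OF assms(1)] by simp
    then show "n \<le> length vs" using card_cycle_edges[OF cyc] by simp
  qed
qed

lemma k_cyclic_graph_cycle_graph:
  "3 \<le> n \<Longrightarrow> k \<le> n \<Longrightarrow> k_cyclic_graph k {..<n} (cycle_graph n)"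
  unfolding k_cyclic_graph_def
  using simple_graph_cycle_graph graph_connected_cycle_graph k_cyclic_cycle_graph by simp

lemma cycle_graph_segment_is_tree:
  assumes "lo \<le> hi" "hi < n"
  shows "is_tree_in {..<n} (cycle_graph n) {lo..hi} (cycle_graph_edge n ` {lo..<hi})"
proof (rule is_tree_inI)
  show "{lo..hi} \<subseteq> {..<n}" using assms(2) by auto
  show "cycle_graph_edge n ` {lo..<hi} \<subseteq> cycle_graph n"
    unfolding cycle_graph_eq_image using assms(2) by auto
  show "\<forall>e\<in>cycle_graph_edge n ` {lo..<hi}. e \<subseteq> {lo..hi}"
    using assms(2) cycle_graph_edge_less by auto
  show "graph_connected {lo..hi} (cycle_graph_edge n ` {lo..<hi})"
  proof (rule graph_connectedI_root)
    fix v assume v: "v \<in> {lo..hi}"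
    have "(adjacent (cycle_graph_edge n ` {lo..<hi}))\<^sup>*\<^sup>* lo v"
    proof (rule adjacent_rtranclp_upt)
      fix i assume "lo \<le> i" "i < v"
      then show "{i, Suc i} \<in> cycle_graph_edge n ` {lo..<hi}"
        using v assms(2) cycle_graph_edge_less[of i n] by force
    qed (use v in simp)
    then show "(adjacent (cycle_graph_edge n ` {lo..<hi}))\<^sup>*\<^sup>* v lo"
      by (rule adjacent_rtranclp_sym)
  qed (use assms(1) in simp)
  show "finite (cycle_graph_edge n ` {lo..<hi})" by simp
  show "card (cycle_graph_edge n ` {lo..<hi}) < card {lo..hi}"
    using card_image_le[of "{lo..<hi}" "cycle_graph_edge n"] assms(1) by simp
qed

lemma cycle_graph_minus_vertex_is_tree:
  assumes "1 \<le> v" "v + 1 < n"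
  shows "is_tree_in {..<n} (cycle_graph n) ({..<n} - {v}) (cycle_graph_edge n ` ({..<n} - {v - 1, v}))"
proof (rule is_tree_inI)
  let ?I = "{..<n} - {v - 1, v}"
  let ?TE = "cycle_graph_edge n ` ?I"
  have edge: "{i, Suc i} \<in> ?TE" if "Suc i < n" "i \<noteq> v - 1" "i \<noteq> v" for i
    using that cycle_graph_edge_less[of i n] by force
  show "{..<n} - {v} \<subseteq> {..<n}" by auto
  show "?TE \<subseteq> cycle_graph n" unfolding cycle_graph_eq_image by (intro image_mono) auto
  show "\<forall>e\<in>?TE. e \<subseteq> {..<n} - {v}"
  proof
    fix e assume "e \<in> ?TE"
    then obtain i where i: "i < n" "i \<noteq> v - 1" "i \<noteq> v" "e = cycle_graph_edge n i" by auto
    have "Suc i mod n \<noteq> v" "Suc i mod n < n" using i(1,2) assms by (auto simp: mod_if)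
    then show "e \<subseteq> {..<n} - {v}" using i unfolding cycle_graph_edge_def by auto
  qed
  show "graph_connected ({..<n} - {v}) ?TE"
  proof (rule graph_connectedI_root)
    fix u assume u: "u \<in> {..<n} - {v}"
    show "(adjacent ?TE)\<^sup>*\<^sup>* u 0"
    proof (cases "u < v")
      case True
      have "(adjacent ?TE)\<^sup>*\<^sup>* 0 u"
        by (rule adjacent_rtranclp_upt) (use True u edge in auto)
      then show ?thesis by (rule adjacent_rtranclp_sym)
    next
      case False
      then have "(adjacent ?TE)\<^sup>*\<^sup>* u (n - 1)"
        by (intro adjacent_rtranclp_upt) (use u edge in auto)
      moreover have "adjacent ?TE (n - 1) 0"
        using assms cycle_graph_edge_last[of "n - 1" n] by force
      ultimately show ?thesis by (rule rtranclp.rtrancl_into_rtrancl)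
    qed
  qed (use assms in simp)
  show "finite ?TE" by simp
  have "card ?TE \<le> n - 2"
    using card_image_le[of ?I "cycle_graph_edge n"] assms by (simp add: card_Diff_subset)
  moreover have "card ({..<n} - {v}) = n - 1" using assms by simp
  ultimately show "card ?TE < card ({..<n} - {v})" using assms by simp
qed

definition cycle_graph_colouring :: "nat \<Rightarrow> (nat \<Rightarrow> nat) \<Rightarrow> nat set \<Rightarrow> nat" where
  "cycle_graph_colouring n g e = g (the_inv_into {..<n} (cycle_graph_edge n) e)"

lemma cycle_graph_colouring_edge:
  "3 \<le> n \<Longrightarrow> i < n \<Longrightarrow> cycle_graph_colouring n g (cycle_graph_edge n i) = g i"
  unfolding cycle_graph_colouring_def using the_inv_into_f_f[OF inj_on_cycle_graph_edge] by simp

lemma colouring_cycle_graph_colouring: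
  assumes "3 \<le> n" "\<And>i. i < n \<Longrightarrow> g i < m"
  shows "colouring (cycle_graph n) m (cycle_graph_colouring n g)"
  unfolding colouring_def cycle_graph_eq_image using assms cycle_graph_colouring_edge by auto

lemma rainbow_cycle_graph_colouring:
  assumes "3 \<le> n" "I \<subseteq> {..<n}" "inj_on g I"
  shows "rainbow (cycle_graph_colouring n g) (cycle_graph_edge n ` I)"
  unfolding rainbow_def
proof (rule inj_onI)
  fix x y assume "x \<in> cycle_graph_edge n ` I" "y \<in> cycle_graph_edge n ` I"
    and eq: "cycle_graph_colouring n g x = cycle_graph_colouring n g y"
  then obtain i j where "i \<in> I" "j \<in> I" "x = cycle_graph_edge n i" "y = cycle_graph_edge n j" by auto
  moreover then have "i < n" "j < n" using assms(2) by auto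
  ultimately have "g i = g j" "i \<in> I" "j \<in> I" "x = cycle_graph_edge n i" "y = cycle_graph_edge n j"
    using eq cycle_graph_colouring_edge[OF assms(1)] by simp_all
  then show "x = y" using assms(3) by (simp add: inj_on_eq_iff)
qed

lemma cycle_graph_spanning_path:
  assumes "3 \<le> n"
  shows "is_tree_in {..<n} (cycle_graph n) {..<n} (cycle_graph_edge n ` {..<n - 1})"
    "card (cycle_graph_edge n ` {..<n - 1}) = n - 1"
proof -
  have "{0..n - 1} = {..<n}" "{0..<n - 1} = {..<n - 1}" using assms by auto
  then show "is_tree_in {..<n} (cycle_graph n) {..<n} (cycle_graph_edge n ` {..<n - 1})"
    using cycle_graph_segment_is_tree[of 0 "n - 1" n] assms by simp
  have "inj_on (cycle_graph_edge n) {..<n - 1}"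
    by (rule inj_on_subset[OF inj_on_cycle_graph_edge[OF assms]]) auto
  then show "card (cycle_graph_edge n ` {..<n - 1}) = n - 1" by (simp add: card_image)
qed

lemma cycle_graph_spanning_path_colouring:
  assumes "3 \<le> n"
  obtains c where "colouring (cycle_graph n) (n - 1) c"
    "rainbow_tree_colouring k {..<n} (cycle_graph n) c"
proof -
  have "0 \<in> {..<n - 1}" using assms by simp
  then have "cycle_graph_edge n ` {..<n - 1} \<noteq> {}" by blast
  then show ?thesis
    using spanning_tree_rainbow_colouring[OF cycle_graph_spanning_path(1)[OF assms]] that
    unfolding cycle_graph_spanning_path(2)[OF assms] by blast
qed

lemma cycle_graph_rainbow_misses:
  assumes "3 \<le> n" "H \<subseteq> {..<n}" "rainbow c TE"
    and "card ((c \<circ> cycle_graph_edge n) ` H) + d \<le> card H"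
  shows "d \<le> card {i \<in> H. cycle_graph_edge n i \<notin> TE}"
proof -
  have "finite H" using assms(2) finite_subset by blast
  moreover have "inj_on (cycle_graph_edge n) H"
    using inj_on_subset[OF inj_on_cycle_graph_edge[OF assms(1)] assms(2)] .
  ultimately show ?thesis using card_le_card_colours_plus_missing[of H _ c TE] assms(3,4) by fastforce
qed

lemma card_cycle_graph_colours_le:
  assumes "colouring (cycle_graph n) m c"
  shows "card ((c \<circ> cycle_graph_edge n) ` {..<n}) \<le> m"
proof -
  have "(c \<circ> cycle_graph_edge n) ` {..<n} \<subseteq> {..<m}"
    using assms unfolding colouring_def cycle_graph_eq_image by auto
  then show ?thesis using card_mono[of "{..<m}"] by fastforce
qed

text \<open>With at most n - 2 colours some four edges carry at most two colours, so a rainbow tree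
  through their left ends (and any other k - 4 vertices) misses two edges of the cycle.\<close>

lemma rx_cycle_graph_ge:
  assumes "4 \<le> k" "k \<le> n"
    and "colouring (cycle_graph n) m c" "rainbow_tree_colouring k {..<n} (cycle_graph n) c"
  shows "n - 1 \<le> m"
proof (rule ccontr)
  let ?g = "c \<circ> cycle_graph_edge n"
  assume "\<not> n - 1 \<le> m"
  then have "card (?g ` {..<n}) + 2 \<le> card {..<n}"
    using card_cycle_graph_colours_le[OF assms(3)] by simp
  then obtain H where H: "H \<subseteq> {..<n}" "card H = 4" "card (?g ` H) + 2 \<le> card H"
    using exists_subset_with_repeats[of "{..<n}" ?g 2] assms(1,2) by auto
  then obtain S where S: "H \<subseteq> S" "S \<subseteq> {..<n}" "card S = k"
    using exists_subset_between[of H k "{..<n}"] assms(1,2) by auto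
  then obtain TV TE where T: "is_tree_in {..<n} (cycle_graph n) TV TE" "S \<subseteq> TV" "rainbow c TE"
    using assms(4) unfolding rainbow_tree_colouring_def by blast
  have "2 \<le> card {i \<in> H. cycle_graph_edge n i \<notin> TE}"
    using cycle_graph_rainbow_misses[OF _ H(1) T(3) H(3)] assms(1,2) by simp
  then obtain M where M: "M \<subseteq> {i \<in> H. cycle_graph_edge n i \<notin> TE}" "card M = 2"
    by (rule obtain_subset_with_card_n)
  then obtain x y where "M = {x, y}" "x \<noteq> y" by (auto simp: card_2_iff)
  moreover have "TE \<subseteq> cycle_graph n" "graph_connected TV TE" using T(1) unfolding is_tree_in_def by auto
  ultimately show False
    using cycle_graph_connected_subgraph_gap_unique[of TE n TV x y] M(1) H(1) S(1) T(2) by auto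
qed

lemma rx_cycle_graph:
  assumes "4 \<le> k" "k \<le> n"
  shows "rx k {..<n} (cycle_graph n) = n - 1"
proof (rule antisym)
  have "3 \<le> n" using assms by simp
  then obtain c where c: "colouring (cycle_graph n) (n - 1) c"
    "rainbow_tree_colouring k {..<n} (cycle_graph n) c"
    by (rule cycle_graph_spanning_path_colouring)
  then show "rx k {..<n} (cycle_graph n) \<le> n - 1" by (rule rx_le)
  show "n - 1 \<le> rx k {..<n} (cycle_graph n)"
    using le_rx[OF _ c] rx_cycle_graph_ge[OF assms] assms(1) by simp
qed

text \<open>Deleting a vertex v \<in> {1, 2, 3} deletes one edge of each of the equally coloured pairs
  {0, 2} and {1, 3}, leaving a rainbow path.\<close>

definition two_pair_colour :: "nat \<Rightarrow> nat" where
  "two_pair_colour i = (if i < 4 then i mod 2 else i - 2)"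

lemma inj_on_two_pair_colour:
  assumes "v \<in> {1, 2, 3}" shows "inj_on two_pair_colour (- {v - 1, v})"
proof (rule inj_onI)
  fix i j assume "i \<in> - {v - 1, v}" "j \<in> - {v - 1, v}" "two_pair_colour i = two_pair_colour j"
  then show "i = j" using assms unfolding two_pair_colour_def by (auto split: if_splits) presburger+
qed

lemma colouring_two_pair_colour:
  assumes "5 \<le> n"
  shows "colouring (cycle_graph n) (n - 2) (cycle_graph_colouring n two_pair_colour)"
  using assms by (intro colouring_cycle_graph_colouring) (auto simp: two_pair_colour_def)

lemma rainbow_tree_colouring_two_pair_colour:
  assumes "5 \<le> n"
  shows "rainbow_tree_colouring 3 {..<n} (cycle_graph n) (cycle_graph_colouring n two_pair_colour)"
  unfolding rainbow_tree_colouring_def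
proof (intro allI impI)
  let ?c = "cycle_graph_colouring n two_pair_colour"
  fix S :: "nat set" assume S: "S \<subseteq> {..<n} \<and> card S = 3"
  have n3: "3 \<le> n" using assms by simp
  show "\<exists>TV TE. is_tree_in {..<n} (cycle_graph n) TV TE \<and> S \<subseteq> TV \<and> rainbow ?c TE"
  proof (cases "{1, 2, 3} \<subseteq> S")
    case True
    have "finite S" using S finite_subset by blast
    then have "S = {1, 2, 3}" using card_subset_eq[OF _ True] S by simp
    also have "\<dots> = {1..3}" by auto
    finally have "S = {1..3}" .
    moreover have "inj_on two_pair_colour {1..<3}"
      by (auto simp: two_pair_colour_def inj_on_def) presburger
    then have "rainbow ?c (cycle_graph_edge n ` {1..<3})"
      using assms by (intro rainbow_cycle_graph_colouring[OF n3]) auto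
    moreover have "is_tree_in {..<n} (cycle_graph n) {1..3} (cycle_graph_edge n ` {1..<3})"
      using cycle_graph_segment_is_tree[of 1 3 n] assms by simp
    ultimately show ?thesis by blast
  next
    case False
    then obtain v where v: "v \<in> {1, 2, 3}" "v \<notin> S" by blast
    let ?I = "{..<n} - {v - 1, v}"
    have "inj_on two_pair_colour ?I" by (rule inj_on_subset[OF inj_on_two_pair_colour[OF v(1)]]) auto
    then have "rainbow ?c (cycle_graph_edge n ` ?I)"
      by (intro rainbow_cycle_graph_colouring[OF n3]) auto
    moreover have "is_tree_in {..<n} (cycle_graph n) ({..<n} - {v}) (cycle_graph_edge n ` ?I)"
      using cycle_graph_minus_vertex_is_tree[of v n] v(1) assms by auto
    ultimately show ?thesis using S v(2) by blast
  qed
qed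

lemma three_indices_straddle:
  fixes I :: "nat set"
  assumes "I \<subseteq> {..<6}" "3 \<le> card I"
  obtains p q e where "p \<in> I" "q \<in> I" "e \<in> {2, 4}" "p < e" "e \<le> q"
proof -
  have fin: "finite I" using assms(1) finite_subset by blast
  then have ne: "I \<noteq> {}" using assms(2) by auto
  let ?p = "Min I" and ?q = "Max I"
  have "I \<subseteq> {?p..?q}" using fin by auto
  then have "3 \<le> ?q + 1 - ?p" using card_mono[of "{?p..?q}" I] assms(2) by simp
  moreover have "I \<subseteq> {?p..<6}" using fin assms(1) by auto
  then have "3 \<le> 6 - ?p" using card_mono[of "{?p..<6}" I] assms(2) by simp
  moreover have "?p \<in> I" "?q \<in> I" using fin ne by simp_all
  ultimately show ?thesis using that[of ?p ?q 2] that[of ?p ?q 4] by (cases "?p < 2") auto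
qed

lemma sorted_six_straddle:
  fixes hs :: "nat list"
  assumes "sorted_wrt (<) hs" "length hs = 6" "M \<subseteq> set hs" "3 \<le> card M"
  obtains a b e where "a \<in> M" "b \<in> M" "e \<in> {hs ! 2, hs ! 4}" "hs ! 0 \<le> a" "a < e" "e \<le> b"
proof -
  let ?I = "{j. j < 6 \<and> hs ! j \<in> M}"
  have "M \<subseteq> (!) hs ` ?I"
  proof
    fix x assume "x \<in> M"
    then have "x \<in> set hs" using assms(3) by blast
    then obtain j where "j < length hs" "hs ! j = x" by (metis in_set_conv_nth)
    then show "x \<in> (!) hs ` ?I" using \<open>x \<in> M\<close> assms(2) by force
  qed
  then have "card M \<le> card ?I" using card_mono[of "(!) hs ` ?I" M] card_image_le[of ?I "(!) hs"] by simp
  then have "3 \<le> card ?I" using assms(4) by simp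
  then obtain p q e where pqe: "p \<in> ?I" "q \<in> ?I" "e \<in> {2, 4}" "p < e" "e \<le> q"
    using three_indices_straddle[of ?I] by blast
  have less: "hs ! i < hs ! j" if "i < j" "j < 6" for i j
    using sorted_wrt_nth_less[OF assms(1) that(1)] that(2) assms(2) by simp
  have "e < 6" "q < 6" using pqe by auto
  then have "hs ! 0 \<le> hs ! p" "hs ! p < hs ! e" "hs ! e \<le> hs ! q"
    using less[of 0 p] less[OF pqe(4)] less[of e q] pqe(4,5) by (cases "p = 0"; cases "e = q"; simp)+
  then show ?thesis using that[of "hs ! p" "hs ! q" "hs ! e"] pqe by auto
qed

text \<open>With at most n - 3 colours some six edges carry at most three colours, and a rainbow tree
  misses three of them. Taking the first, third and fifth of their left ends, two of the missed
  edges separate the first from one of the others.\<close>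

lemma rx3_cycle_graph_ge:
  assumes "6 \<le> n" "colouring (cycle_graph n) m c" "rainbow_tree_colouring 3 {..<n} (cycle_graph n) c"
  shows "n - 2 \<le> m"
proof (rule ccontr)
  let ?g = "c \<circ> cycle_graph_edge n"
  assume "\<not> n - 2 \<le> m"
  then have "card (?g ` {..<n}) + 3 \<le> card {..<n}"
    using card_cycle_graph_colours_le[OF assms(2)] by simp
  then obtain H where H: "H \<subseteq> {..<n}" "card H = 6" and excess: "card (?g ` H) + 3 \<le> card H"
    using exists_subset_with_repeats[of "{..<n}" ?g 3] assms(1) by auto
  define hs where "hs = sorted_list_of_set H"
  have "finite H" using H(1) finite_subset by blast
  then have hs: "sorted_wrt (<) hs" "length hs = 6" "set hs = H"
    unfolding hs_def using H(2) by (simp_all add: strict_sorted_list_of_set)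
  define S where "S = {hs ! 0, hs ! 2, hs ! 4}"
  have "distinct hs" using hs(1) strict_sorted_iff by blast
  then have "card S = 3" unfolding S_def using hs(2) by (simp add: nth_eq_iff_index_eq)
  moreover have "S \<subseteq> {..<n}" unfolding S_def using hs(2,3) H(1) nth_mem by fastforce
  ultimately obtain TV TE where T: "is_tree_in {..<n} (cycle_graph n) TV TE" "S \<subseteq> TV" "rainbow c TE"
    using assms(3) unfolding rainbow_tree_colouring_def by blast
  have TE: "TE \<subseteq> cycle_graph n" "graph_connected TV TE" using T(1) unfolding is_tree_in_def by auto
  let ?M = "{i \<in> H. cycle_graph_edge n i \<notin> TE}"
  have "3 \<le> card ?M" using cycle_graph_rainbow_misses[OF _ H(1) T(3) excess] assms(1) by simp
  then obtain a b e where abe: "a \<in> ?M" "b \<in> ?M" "e \<in> {hs ! 2, hs ! 4}" "hs ! 0 \<le> a" "a < e" "e \<le> b"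
    using sorted_six_straddle[OF hs(1,2), of ?M] hs(3) by blast
  have "\<not> (adjacent TE)\<^sup>*\<^sup>* (hs ! 0) e"
    using abe H(1) by (intro cycle_graph_gaps_separate[OF TE(1), of a b]) auto
  moreover have "hs ! 0 \<in> TV" "e \<in> TV" using T(2) abe(3) unfolding S_def by auto
  ultimately show False using TE(2) unfolding graph_connected_def by blast
qed

lemma rx3_cycle_graph:
  assumes "6 \<le> n" shows "rx 3 {..<n} (cycle_graph n) = n - 2"
proof (rule antisym)
  have "5 \<le> n" using assms by simp
  note c = colouring_two_pair_colour[OF this] rainbow_tree_colouring_two_pair_colour[OF this]
  show "rx 3 {..<n} (cycle_graph n) \<le> n - 2" using rx_le[OF c] .
  show "n - 2 \<le> rx 3 {..<n} (cycle_graph n)"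
    using le_rx[OF _ c] rx3_cycle_graph_ge[OF assms] by simp
qed

section \<open>The cocktail party graph\<close>

text \<open>Vertices 2i and 2i + 1 form the i-th non-adjacent pair; all other pairs are adjacent.\<close>

definition cocktail_party :: "nat \<Rightarrow> nat set set" where
  "cocktail_party m = {{x, y} | x y. x < 2 * m \<and> y < 2 * m \<and> x div 2 \<noteq> y div 2}"

lemma cocktail_party_iff:
  "{x, y} \<in> cocktail_party m \<longleftrightarrow> x < 2 * m \<and> y < 2 * m \<and> x div 2 \<noteq> y div 2"
proof
  assume "{x, y} \<in> cocktail_party m"
  then obtain a b where "{x, y} = {a, b}" "a < 2 * m" "b < 2 * m" "a div 2 \<noteq> b div 2"
    unfolding cocktail_party_def by blast
  then show "x < 2 * m \<and> y < 2 * m \<and> x div 2 \<noteq> y div 2" by (auto simp: doubleton_eq_iff)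
qed (auto simp: cocktail_party_def)

lemma simple_graph_cocktail_party: "simple_graph {..<2 * m} (cocktail_party m)"
  unfolding simple_graph_def
proof (intro conjI ballI)
  fix e assume "e \<in> cocktail_party m"
  then obtain x y where "e = {x, y}" "x < 2 * m" "y < 2 * m" "x div 2 \<noteq> y div 2"
    unfolding cocktail_party_def by blast
  then show "\<exists>u v. u \<in> {..<2 * m} \<and> v \<in> {..<2 * m} \<and> u \<noteq> v \<and> e = {u, v}" by auto
qed simp

lemma graph_connected_cocktail_party:
  assumes "2 \<le> m" shows "graph_connected {..<2 * m} (cocktail_party m)"
proof (rule graph_connectedI_root)
  fix u assume u: "u \<in> {..<2 * m}"
  show "(adjacent (cocktail_party m))\<^sup>*\<^sup>* u 0"
  proof (cases "u div 2 = 0")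
    case False
    then have "adjacent (cocktail_party m) u 0" using u assms by (simp add: cocktail_party_iff)
    then show ?thesis by (rule r_into_rtranclp)
  next
    case True
    then consider "u = 0" | "u = 1" by linarith
    then show ?thesis
    proof cases
      case 2
      have "adjacent (cocktail_party m) 1 2" "adjacent (cocktail_party m) 2 0"
        using assms by (simp_all add: cocktail_party_iff)
      then show ?thesis using 2 by (meson converse_rtranclp_into_rtranclp r_into_rtranclp)
    qed simp
  qed
qed (use assms in simp)

definition square_colour :: "nat set \<Rightarrow> nat" where
  "square_colour e = 2 * (Min e mod 2) + Max e mod 2"

lemma rainbow_square:
  assumes "i < m" "j < m" "i \<noteq> j"
  shows "is_cycle (cocktail_party m) [2 * i, 2 * j, 2 * i + 1, 2 * j + 1]"
    "rainbow square_colour (cycle_edges [2 * i, 2 * j, 2 * i + 1, 2 * j + 1])"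
proof -
  show "is_cycle (cocktail_party m) [2 * i, 2 * j, 2 * i + 1, 2 * j + 1]"
    unfolding is_cycle_def cycle_edges_square using assms by (simp add: cocktail_party_iff)
  have colour: "square_colour {a, b} = 2 * (min a b mod 2) + max a b mod 2" for a b
    unfolding square_colour_def by simp
  consider "i < j" | "j < i" using assms(3) by linarith
  then have "inj_on square_colour
    {{2 * i, 2 * j}, {2 * j, 2 * i + 1}, {2 * i + 1, 2 * j + 1}, {2 * j + 1, 2 * i}}"
  proof cases
    case 1
    then have "square_colour {2 * i, 2 * j} = 0" "square_colour {2 * j, 2 * i + 1} = 2"
      "square_colour {2 * i + 1, 2 * j + 1} = 3" "square_colour {2 * j + 1, 2 * i} = 1"
      by (simp_all add: colour min_def max_def)
    then show ?thesis unfolding inj_on_def by auto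
  next
    case 2
    then have "square_colour {2 * i, 2 * j} = 0" "square_colour {2 * j, 2 * i + 1} = 1"
      "square_colour {2 * i + 1, 2 * j + 1} = 3" "square_colour {2 * j + 1, 2 * i} = 2"
      by (simp_all add: colour min_def max_def)
    then show ?thesis unfolding inj_on_def by auto
  qed
  then show "rainbow square_colour (cycle_edges [2 * i, 2 * j, 2 * i + 1, 2 * j + 1])"
    unfolding rainbow_def cycle_edges_square .
qed

lemma rainbow_cycle_colouring_square_colour:
  assumes "2 \<le> m"
  shows "rainbow_cycle_colouring 2 {..<2 * m} (cocktail_party m) square_colour"
  unfolding rainbow_cycle_colouring_def
proof (intro allI impI)
  fix S :: "nat set" assume S: "S \<subseteq> {..<2 * m} \<and> card S = 2"
  then obtain u w where uw: "S = {u, w}" "u < 2 * m" "w < 2 * m" by (auto simp: card_2_iff)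
  define i where "i = u div 2"
  define j where "j = (if w div 2 \<noteq> i then w div 2 else if i = 0 then 1 else 0)"
  have ij: "i < m" "j < m" "i \<noteq> j" unfolding i_def j_def using uw assms by auto
  have "S \<subseteq> set [2 * i, 2 * j, 2 * i + 1, 2 * j + 1]"
    unfolding uw(1) i_def j_def by auto
  then show "\<exists>vs. is_cycle (cocktail_party m) vs \<and> S \<subseteq> set vs \<and> rainbow square_colour (cycle_edges vs)"
    using rainbow_square[OF ij] by blast
qed

lemma crx2_cocktail_party:
  assumes "2 \<le> m" shows "crx 2 {..<2 * m} (cocktail_party m) = 4"
proof (rule antisym)
  have colouring: "colouring (cocktail_party m) 4 square_colour"
    unfolding colouring_def square_colour_def by auto
  note rainbow = rainbow_cycle_colouring_square_colour[OF assms]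
  show "crx 2 {..<2 * m} (cocktail_party m) \<le> 4" using crx_le[OF colouring rainbow] .
  have S: "{0, 1} \<subseteq> {..<2 * m}" "card {0 :: nat, 1} = 2" using assms by auto
  note fin = simple_graph_finite_edges[OF simple_graph_cocktail_party]
  show "4 \<le> crx 2 {..<2 * m} (cocktail_party m)"
  proof (rule le_crx_if_cycles_long[OF fin k_cyclic_if_rainbow_cycle_colouring[OF rainbow] S])
    fix vs assume "is_cycle (cocktail_party m) vs" "{0, 1} \<subseteq> set vs"
    moreover have "{0, 1} \<notin> cocktail_party m" by (simp add: cocktail_party_iff)
    ultimately have "length vs \<noteq> 3" using triangle_vertices_adjacent[of _ vs 0 1] by auto
    then show "4 \<le> length vs" using \<open>is_cycle _ vs\<close> unfolding is_cycle_def by simp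
  qed
qed

lemma k_cyclic_graph_cocktail_party:
  "2 \<le> m \<Longrightarrow> k_cyclic_graph 2 {..<2 * m} (cocktail_party m)"
  unfolding k_cyclic_graph_def
  using simple_graph_cocktail_party graph_connected_cocktail_party
    k_cyclic_if_rainbow_cycle_colouring[OF rainbow_cycle_colouring_square_colour] by simp

definition parity_colour :: "nat set \<Rightarrow> nat" where
  "parity_colour e = \<Sum> e mod 2"

lemma rainbow_tree_colouring_parity_colour:
  assumes "2 \<le> m"
  shows "rainbow_tree_colouring 2 {..<2 * m} (cocktail_party m) parity_colour"
  unfolding rainbow_tree_colouring_def
proof (intro allI impI)
  fix S :: "nat set" assume S: "S \<subseteq> {..<2 * m} \<and> card S = 2"
  then obtain u w where uw: "S = {u, w}" "u \<noteq> w" "u < 2 * m" "w < 2 * m" by (auto simp: card_2_iff)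
  show "\<exists>TV TE. is_tree_in {..<2 * m} (cocktail_party m) TV TE \<and> S \<subseteq> TV \<and> rainbow parity_colour TE"
  proof (cases "u div 2 = w div 2")
    case False
    then have "is_tree_in {..<2 * m} (cocktail_party m) {u, w} {{u, w}}"
      using uw by (intro is_tree_in_edge) (simp_all add: cocktail_party_iff)
    moreover have "rainbow parity_colour {{u, w}}" unfolding rainbow_def by simp
    ultimately show ?thesis using uw(1) by blast
  next
    case True
    define i where "i = u div 2"
    define j where "j = (if i = 0 then 1 else 0 :: nat)"
    have ij: "i < m" "j < m" "i \<noteq> j" unfolding i_def j_def using uw assms by auto
    have "S \<subseteq> {2 * i, 2 * j, 2 * i + 1}" unfolding uw(1) i_def using True by auto
    moreover have "is_tree_in {..<2 * m} (cocktail_party m) {2 * i, 2 * j, 2 * i + 1}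
        {{2 * i, 2 * j}, {2 * j, 2 * i + 1}}"
      using ij by (intro is_tree_in_path3) (auto simp: cocktail_party_iff)
    moreover have "rainbow parity_colour {{2 * i, 2 * j}, {2 * j, 2 * i + 1}}"
      using ij unfolding rainbow_def parity_colour_def by (auto simp: inj_on_def doubleton_eq_iff)
    ultimately show ?thesis by blast
  qed
qed

lemma rx2_cocktail_party:
  assumes "2 \<le> m" shows "rx 2 {..<2 * m} (cocktail_party m) = 2"
proof (rule antisym)
  have colouring: "colouring (cocktail_party m) 2 parity_colour"
    unfolding colouring_def parity_colour_def by auto
  note rainbow = rainbow_tree_colouring_parity_colour[OF assms]
  show "rx 2 {..<2 * m} (cocktail_party m) \<le> 2" using rx_le[OF colouring rainbow] .
  have pair: "(0 :: nat) \<in> {..<2 * m}" "1 \<in> {..<2 * m}" "{0, 1} \<notin> cocktail_party m"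
    using assms by (simp_all add: cocktail_party_iff)
  show "2 \<le> rx 2 {..<2 * m} (cocktail_party m)"
  proof (rule le_rx[OF _ colouring rainbow])
    fix l c assume "colouring (cocktail_party m) l c"
      "rainbow_tree_colouring 2 {..<2 * m} (cocktail_party m) c"
    then show "2 \<le> l"
      using two_le_colours_if_nonadjacent[OF simple_graph_cocktail_party pair(1,2) _ pair(3)] by simp
  qed simp
qed

section \<open>The complete split graph\<close>

definition split_graph :: "nat \<Rightarrow> nat \<Rightarrow> nat set set" where
  "split_graph h n = {{x, y} | x y. x < n \<and> y < n \<and> x \<noteq> y \<and> (x < h \<or> y < h)}"

lemma split_graph_iff:
  "{x, y} \<in> split_graph h n \<longleftrightarrow> x < n \<and> y < n \<and> x \<noteq> y \<and> (x < h \<or> y < h)"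
proof
  assume "{x, y} \<in> split_graph h n"
  then obtain a b where "{x, y} = {a, b}" "a < n" "b < n" "a \<noteq> b" "a < h \<or> b < h"
    unfolding split_graph_def by blast
  then show "x < n \<and> y < n \<and> x \<noteq> y \<and> (x < h \<or> y < h)" by (auto simp: doubleton_eq_iff)
qed (auto simp: split_graph_def)

lemma simple_graph_split_graph: "simple_graph {..<n} (split_graph h n)"
  unfolding simple_graph_def
proof (intro conjI ballI)
  fix e assume "e \<in> split_graph h n"
  then obtain x y where "e = {x, y}" "x < n" "y < n" "x \<noteq> y" unfolding split_graph_def by blast
  then show "\<exists>u v. u \<in> {..<n} \<and> v \<in> {..<n} \<and> u \<noteq> v \<and> e = {u, v}" by auto
qed simp

lemma graph_connected_split_graph:
  assumes "0 < h" "0 < n" shows "graph_connected {..<n} (split_graph h n)"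
proof (rule graph_connectedI_root)
  fix u assume "u \<in> {..<n}"
  then have "u = 0 \<or> adjacent (split_graph h n) u 0" using assms by (auto simp: split_graph_iff)
  then show "(adjacent (split_graph h n))\<^sup>*\<^sup>* u 0" by auto
qed (use assms in simp)

definition triangle_colour :: "nat set \<Rightarrow> nat" where
  "triangle_colour e = (if e = {0, 1} then 0 else if 0 \<in> e then 1 else 2)"

lemma rainbow_cycle_colouring_triangle_colour:
  assumes "3 \<le> n"
  shows "rainbow_cycle_colouring 1 {..<n} (split_graph 2 n) triangle_colour"
  unfolding rainbow_cycle_colouring_def
proof (intro allI impI)
  fix S :: "nat set" assume "S \<subseteq> {..<n} \<and> card S = 1"
  then obtain v where v: "S = {v}" "v < n" by (auto simp: card_1_singleton_iff)
  define w where "w = max 2 v"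
  have w: "2 \<le> w" "w < n" "S \<subseteq> set [0, 1, w]" unfolding w_def using v assms by auto
  have "is_cycle (split_graph 2 n) [0, 1, w]"
    unfolding is_cycle_def cycle_edges_triangle using w assms by (simp add: split_graph_iff)
  moreover have "rainbow triangle_colour (cycle_edges [0, 1, w])"
    unfolding rainbow_def cycle_edges_triangle using w(1)
    by (auto simp: inj_on_def triangle_colour_def doubleton_eq_iff)
  ultimately show
    "\<exists>vs. is_cycle (split_graph 2 n) vs \<and> S \<subseteq> set vs \<and> rainbow triangle_colour (cycle_edges vs)"
    using w(3) by blast
qed

lemma crx1_split_graph:
  assumes "3 \<le> n" shows "crx 1 {..<n} (split_graph 2 n) = 3"
proof (rule antisym)
  have colouring: "colouring (split_graph 2 n) 3 triangle_colour"
    unfolding colouring_def triangle_colour_def by auto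
  note rainbow = rainbow_cycle_colouring_triangle_colour[OF assms]
  show "crx 1 {..<n} (split_graph 2 n) \<le> 3" using crx_le[OF colouring rainbow] .
  have "{0} \<subseteq> {..<n}" "card {0 :: nat} = 1" using assms by auto
  then show "3 \<le> crx 1 {..<n} (split_graph 2 n)"
    using le_crx_if_cycles_long[OF simple_graph_finite_edges[OF simple_graph_split_graph]
        k_cyclic_if_rainbow_cycle_colouring[OF rainbow]]
    unfolding is_cycle_def by blast
qed

lemma k_cyclic_graph_triangle_split_graph:
  "3 \<le> n \<Longrightarrow> k_cyclic_graph 1 {..<n} (split_graph 2 n)"
  unfolding k_cyclic_graph_def
  using simple_graph_split_graph graph_connected_split_graph[of 2 n]
    k_cyclic_if_rainbow_cycle_colouring[OF rainbow_cycle_colouring_triangle_colour] by simp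

definition alternate :: "nat list \<Rightarrow> nat \<Rightarrow> nat" where
  "alternate ls j = (if even j then j div 2 else ls ! (j div 2))"

lemma alternate_image: "alternate ls ` {..<2 * length ls} = {..<length ls} \<union> set ls"
proof
  show "alternate ls ` {..<2 * length ls} \<subseteq> {..<length ls} \<union> set ls"
    unfolding alternate_def by auto
  show "{..<length ls} \<union> set ls \<subseteq> alternate ls ` {..<2 * length ls}"
  proof
    fix x assume "x \<in> {..<length ls} \<union> set ls"
    then consider "x < length ls" | i where "i < length ls" "x = ls ! i" by (auto simp: in_set_conv_nth)
    then show "x \<in> alternate ls ` {..<2 * length ls}"
    proof cases
      case 1
      then have "alternate ls (2 * x) = x" "2 * x < 2 * length ls" unfolding alternate_def by simp_all
      then show ?thesis by (metis image_eqI lessThan_iff)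
    next
      case 2
      then have "alternate ls (2 * i + 1) = x" "2 * i + 1 < 2 * length ls"
        unfolding alternate_def by simp_all
      then show ?thesis by (metis image_eqI lessThan_iff)
    qed
  qed
qed

lemma inj_on_alternate:
  assumes "distinct ls" "set ls \<inter> {..<length ls} = {}"
  shows "inj_on (alternate ls) {..<2 * length ls}"
proof (rule inj_onI)
  fix i j assume i: "i \<in> {..<2 * length ls}" and j: "j \<in> {..<2 * length ls}"
    and eq: "alternate ls i = alternate ls j"
  have even: "alternate ls i < length ls" if "even i" "i < 2 * length ls" for i
    using that unfolding alternate_def by auto
  have odd: "alternate ls i \<notin> {..<length ls}" if "odd i" "i < 2 * length ls" for i
  proof -
    have "i div 2 < length ls" using that(2) by presburger
    then have "ls ! (i div 2) \<in> set ls" by simp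
    then show ?thesis using that(1) assms(2) unfolding alternate_def by auto
  qed
  consider "even i" "even j" | "odd i" "odd j" | "even i \<noteq> even j" by blast
  then show "i = j"
  proof cases
    case 1
    then show ?thesis using eq unfolding alternate_def by (metis dvd_mult_div_cancel)
  next
    case 2
    then have "ls ! (i div 2) = ls ! (j div 2)" using eq unfolding alternate_def by simp
    then have "i div 2 = j div 2" using i j assms(1) nth_eq_iff_index_eq by fastforce
    then show ?thesis using 2 by (metis odd_two_times_div_two_succ)
  next
    case 3
    then show ?thesis using eq i j even odd by (cases "even i") (fastforce+)
  qed
qed

lemma alternating_cycle_in_split_graph:
  assumes "2 \<le> length ls" "distinct ls" "set ls \<subseteq> {length ls..<n}"
  shows "is_cycle (split_graph (length ls) n) (map (alternate ls) [0..<2 * length ls])"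
proof (rule is_cycleI)
  let ?k = "length ls" and ?vs = "map (alternate ls) [0..<2 * length ls]"
  have inj: "inj_on (alternate ls) {..<2 * ?k}" using inj_on_alternate assms(2,3) by fastforce
  then show "3 \<le> length ?vs" "distinct ?vs" using assms(1) by (auto simp: distinct_map atLeast0LessThan)
  have "ls ! 0 \<in> set ls" using assms(1) by (intro nth_mem) linarith
  then have "?k < n" using assms(3) by auto
  have range: "alternate ls i < n" if "i < 2 * ?k" for i
  proof -
    have "alternate ls i \<in> {..<?k} \<union> set ls" using alternate_image[of ls] that by blast
    then show ?thesis using \<open>?k < n\<close> assms(3) by auto
  qed
  fix i assume "i < length ?vs"
  then have i: "i < 2 * ?k" by simp
  define j where "j = (i + 1) mod (2 * ?k)"
  have j: "j < 2 * ?k" "i \<noteq> j" "even i \<or> even j"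
    unfolding j_def using i assms(1) by (auto simp: mod_if)
  have "alternate ls i \<noteq> alternate ls j" using inj i j(1,2) by (auto dest: inj_onD)
  moreover have "alternate ls i < ?k \<or> alternate ls j < ?k"
    using j(3) i j(1) unfolding alternate_def by auto
  ultimately have "{alternate ls i, alternate ls j} \<in> split_graph ?k n"
    using range i j(1) by (auto simp: split_graph_iff)
  then show "{?vs ! i, ?vs ! ((i + 1) mod length ?vs)} \<in> split_graph ?k n"
    using i j(1) unfolding j_def by simp
qed

lemma k_cyclic_split_graph:
  assumes "2 \<le> k" "2 * k \<le> n" shows "k_cyclic k {..<n} (split_graph k n)"
  unfolding k_cyclic_def
proof (intro allI impI)
  fix S assume S: "S \<subseteq> {..<n} \<and> card S = k"
  have "card (S - {..<k}) \<le> k" using S card_mono[of S "S - {..<k}"] finite_subset by fastforce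
  moreover have "S - {..<k} \<subseteq> {k..<n}" "k \<le> card {k..<n}" using S assms(2) by auto
  ultimately obtain L where L: "S - {..<k} \<subseteq> L" "L \<subseteq> {k..<n}" "card L = k"
    using exists_subset_between[of "S - {..<k}" k "{k..<n}"] by auto
  obtain ls where ls: "set ls = L" "distinct ls"
    using finite_distinct_list[of L] L(2) finite_subset by blast
  then have k: "length ls = k" using L(3) distinct_card by fastforce
  then have "is_cycle (split_graph k n) (map (alternate ls) [0..<2 * k])"
    using alternating_cycle_in_split_graph[OF _ ls(2)] assms(1) ls(1) L(2) by blast
  moreover have "S \<subseteq> set (map (alternate ls) [0..<2 * k])"
    using alternate_image[of ls] k ls(1) L(1) by (auto simp: atLeast0LessThan)
  ultimately show "\<exists>vs. is_cycle (split_graph k n) vs \<and> S \<subseteq> set vs" by blast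
qed

lemma k_cyclic_graph_split_graph:
  "2 \<le> k \<Longrightarrow> 2 * k \<le> n \<Longrightarrow> k_cyclic_graph k {..<n} (split_graph k n)"
  unfolding k_cyclic_graph_def
  using simple_graph_split_graph graph_connected_split_graph[of k n] k_cyclic_split_graph by simp

text \<open>Designed for the trees made of the star at 0 inside the clique, whose spokes get the colours
  k, ..., 2k - 2, and one edge from each outside vertex to its own clique vertex, which gets the
  colour of that clique vertex.\<close>

definition star_colour :: "nat \<Rightarrow> nat set \<Rightarrow> nat" where
  "star_colour k e = (if Max e < k then (if Min e = 0 then k + Max e - 1 else 0) else Min e)"

lemma star_colour_doubleton:
  "star_colour k {x, y} = (if max x y < k then (if min x y = 0 then k + max x y - 1 else 0) else min x y)"
proof -
  have "Max {x, y} = max x y" "Min {x, y} = min x y" by simp_all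
  then show ?thesis unfolding star_colour_def by (simp only:)
qed

lemma colouring_star_colour:
  assumes "1 \<le> k" shows "colouring (split_graph k n) (2 * k - 1) (star_colour k)"
  unfolding colouring_def
proof (rule image_subsetI)
  fix e assume "e \<in> split_graph k n"
  then obtain x y where "e = {x, y}" "x < k \<or> y < k" unfolding split_graph_def by blast
  then show "star_colour k e \<in> {..<2 * k - 1}" using assms by (auto simp: star_colour_doubleton)
qed

definition star_tree_edges :: "nat \<Rightarrow> (nat \<Rightarrow> nat) \<Rightarrow> nat set \<Rightarrow> nat set set" where
  "star_tree_edges k \<sigma> L = (\<lambda>j. {0, j}) ` {1..<k} \<union> (\<lambda>x. {x, \<sigma> x}) ` L"

lemma split_graph_star_tree:
  assumes "0 < k" "k \<le> n" "L \<subseteq> {k..<n}" "\<sigma> ` L \<subseteq> {..<k}"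
  shows "is_tree_in {..<n} (split_graph k n) ({..<k} \<union> L) (star_tree_edges k \<sigma> L)"
  unfolding star_tree_edges_def
proof (rule is_tree_inI)
  let ?star = "(\<lambda>j. {0, j}) ` {1..<k}" and ?pend = "(\<lambda>x. {x, \<sigma> x}) ` L"
  have \<sigma>: "\<sigma> x < k" "k \<le> x" "x < n" if "x \<in> L" for x using assms(3,4) that by auto
  have fin: "finite L" using assms(3) finite_subset by blast
  show "{..<k} \<union> L \<subseteq> {..<n}" "?star \<union> ?pend \<subseteq> split_graph k n"
    "\<forall>e\<in>?star \<union> ?pend. e \<subseteq> {..<k} \<union> L"
    using assms(1,2) \<sigma> by (fastforce simp: split_graph_iff)+
  show "graph_connected ({..<k} \<union> L) (?star \<union> ?pend)"
  proof (rule graph_connectedI_root)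
    have hub: "(adjacent (?star \<union> ?pend))\<^sup>*\<^sup>* j 0" if "j < k" for j
      using that by (cases "j = 0") (auto simp: insert_commute intro!: r_into_rtranclp)
    fix v assume "v \<in> {..<k} \<union> L"
    then consider "v < k" | "v \<in> L" by blast
    then show "(adjacent (?star \<union> ?pend))\<^sup>*\<^sup>* v 0"
    proof cases
      case 2
      then have "adjacent (?star \<union> ?pend) v (\<sigma> v)" by blast
      then show ?thesis using hub[OF \<sigma>(1)[OF 2]] by (rule converse_rtranclp_into_rtranclp)
    qed (rule hub)
  qed (use assms(1) in simp)
  show "finite (?star \<union> ?pend)" using fin by simp
  have "card (?star \<union> ?pend) \<le> (k - 1) + card L"
    using card_Un_le[of ?star ?pend] card_image_le[of "{1..<k}" "\<lambda>j. {0, j}"]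
      card_image_le[OF fin, of "\<lambda>x. {x, \<sigma> x}"]
    by simp
  moreover have "{..<k} \<inter> L = {}" using \<sigma>(2) by fastforce
  then have "card ({..<k} \<union> L) = k + card L" using fin by (simp add: card_Un_disjoint)
  ultimately show "card (?star \<union> ?pend) < card ({..<k} \<union> L)" using assms(1) by simp
qed

lemma rainbow_star_tree_edges:
  assumes "L \<subseteq> {k..}" "\<sigma> ` L \<subseteq> {..<k}" "inj_on \<sigma> L"
  shows "rainbow (star_colour k) (star_tree_edges k \<sigma> L)"
proof -
  let ?star = "(\<lambda>j. {0, j}) ` {1..<k}" and ?pend = "(\<lambda>x. {x, \<sigma> x}) ` L"
  have spoke: "star_colour k {0, j} = k + j - 1" if "j \<in> {1..<k}" for j
    using that by (simp add: star_colour_doubleton)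
  have pendant: "star_colour k {x, \<sigma> x} = \<sigma> x" if "x \<in> L" for x
    using that assms(1,2) by (auto simp: star_colour_doubleton)
  have "inj_on (star_colour k) ?star"
    by (rule inj_onI) (auto simp: spoke)
  moreover have "inj_on (star_colour k) ?pend"
  proof (rule inj_onI)
    fix e e' assume "e \<in> ?pend" "e' \<in> ?pend" and eq: "star_colour k e = star_colour k e'"
    then obtain x x' where "x \<in> L" "x' \<in> L" "e = {x, \<sigma> x}" "e' = {x', \<sigma> x'}" by blast
    moreover then have "\<sigma> x = \<sigma> x'" using eq pendant by simp
    ultimately show "e = e'" using assms(3) by (auto dest: inj_onD)
  qed
  moreover have "star_colour k ` ?star \<inter> star_colour k ` ?pend = {}"
  proof -
    have "star_colour k ` ?star \<subseteq> {k..}" "star_colour k ` ?pend \<subseteq> {..<k}"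
      using assms(2) by (auto simp: spoke pendant)
    moreover have "{k..} \<inter> {..<k} = {}" by auto
    ultimately show ?thesis by blast
  qed
  ultimately show ?thesis unfolding rainbow_def star_tree_edges_def inj_on_Un by blast
qed

lemma rainbow_tree_colouring_star_colour:
  assumes "1 \<le> k" "k \<le> n"
  shows "rainbow_tree_colouring k {..<n} (split_graph k n) (star_colour k)"
  unfolding rainbow_tree_colouring_def
proof (intro allI impI)
  fix S assume S: "S \<subseteq> {..<n} \<and> card S = k"
  let ?L = "S - {..<k}"
  have "finite ?L" "card ?L \<le> card {..<k}"
    using S card_mono[of S ?L] finite_subset by fastforce+
  then obtain \<sigma> where \<sigma>: "\<sigma> ` ?L \<subseteq> {..<k}" "inj_on \<sigma> ?L" using card_le_inj[of ?L "{..<k}"] by auto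
  have "?L \<subseteq> {k..<n}" using S by auto
  then have "is_tree_in {..<n} (split_graph k n) ({..<k} \<union> ?L) (star_tree_edges k \<sigma> ?L)"
    using split_graph_star_tree[of k n ?L \<sigma>] \<sigma>(1) assms by simp
  moreover have "rainbow (star_colour k) (star_tree_edges k \<sigma> ?L)"
    using \<sigma> by (intro rainbow_star_tree_edges) auto
  moreover have "S \<subseteq> {..<k} \<union> ?L" by blast
  ultimately show
    "\<exists>TV TE. is_tree_in {..<n} (split_graph k n) TV TE \<and> S \<subseteq> TV \<and> rainbow (star_colour k) TE"
    by blast
qed

lemma rx_split_graph_le:
  assumes "1 \<le> k" "k \<le> n" shows "rx k {..<n} (split_graph k n) \<le> 2 * k - 1"
  using rx_le[OF colouring_star_colour rainbow_tree_colouring_star_colour] assms by blast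

text \<open>If k vertices outside the clique see it in the same colours, a cycle through them leaves each
  of them along two edges into the clique, and these 2k edges carry at most k colours.\<close>

lemma split_graph_equal_profiles_no_rainbow_cycle:
  assumes "is_cycle (split_graph k n) vs" "T \<subseteq> set vs" "T \<subseteq> {k..<n}" "card T = k" "1 \<le> k"
    and "\<And>x h. x \<in> T \<Longrightarrow> h < k \<Longrightarrow> c {x, h} = w h"
  shows "\<not> rainbow c (cycle_edges vs)"
proof
  assume rainbow: "rainbow c (cycle_edges vs)"
  have "\<exists>p q. p \<noteq> q \<and> {x, p} \<in> cycle_edges vs \<and> {x, q} \<in> cycle_edges vs" if "x \<in> T" for x
    using cycle_two_neighbours[OF assms(1)] assms(2) that by blast
  then obtain p q where pq:
    "\<And>x. x \<in> T \<Longrightarrow> p x \<noteq> q x \<and> {x, p x} \<in> cycle_edges vs \<and> {x, q x} \<in> cycle_edges vs"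
    by metis
  have into_clique: "y < k" if "x \<in> T" "{x, y} \<in> cycle_edges vs" for x y
  proof -
    have "{x, y} \<in> split_graph k n" using that(2) assms(1) unfolding is_cycle_def by blast
    then show "y < k" using that(1) assms(3) by (auto simp: split_graph_iff)
  qed
  define \<phi> where "\<phi> xb = (if snd xb then p (fst xb) else q (fst xb))" for xb
  have edge: "{fst xb, \<phi> xb} \<in> cycle_edges vs" "\<phi> xb < k" if "xb \<in> T \<times> UNIV" for xb
    using that pq into_clique unfolding \<phi>_def by auto
  have inj: "inj_on \<phi> (T \<times> UNIV)"
  proof (rule inj_onI)
    fix xb yb assume xb: "xb \<in> T \<times> UNIV" and yb: "yb \<in> T \<times> UNIV" and eq: "\<phi> xb = \<phi> yb"
    then have "c {fst xb, \<phi> xb} = c {fst yb, \<phi> yb}" using assms(6) edge by auto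
    then have "{fst xb, \<phi> xb} = {fst yb, \<phi> yb}"
      using rainbow edge xb yb unfolding rainbow_def by (auto dest: inj_onD)
    then have "fst xb = fst yb" using eq edge(2)[OF xb] xb assms(3) by (auto simp: doubleton_eq_iff)
    moreover have "p (fst xb) \<noteq> q (fst xb)" using pq xb by auto
    ultimately show "xb = yb" using eq unfolding \<phi>_def by (cases xb, cases yb) (auto split: if_splits)
  qed
  have "\<phi> ` (T \<times> UNIV) \<subseteq> {..<k}" using edge by auto
  from card_inj_on_le[OF inj this] have "card (T \<times> (UNIV :: bool set)) \<le> k" by simp
  then show False using assms(4,5) by (simp add: card_cartesian_product)
qed

text \<open>There are at most m^k colour profiles of the edges from a vertex outside the clique into
  the clique, so by pigeonhole k such vertices share a profile.\<close>

lemma split_graph_common_profile: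
  assumes "colouring (split_graph k n) m col" "(k - 1) * m ^ k < n - k"
  obtains T ws where "T \<subseteq> {k..<n}" "card T = k" "\<And>x h. x \<in> T \<Longrightarrow> h < k \<Longrightarrow> col {x, h} = ws ! h"
proof -
  define profile where "profile x = map (\<lambda>h. col {x, h}) [0..<k]" for x
  define P where "P = {ws. set ws \<subseteq> {..<m} \<and> length ws = k}"
  have "col {x, h} < m" if "x \<in> {k..<n}" "h < k" for x h
  proof -
    have "{x, h} \<in> split_graph k n" using that by (auto simp: split_graph_iff)
    then show ?thesis using assms(1) unfolding colouring_def by auto
  qed
  then have profile: "profile \<in> {k..<n} \<rightarrow> P" unfolding profile_def P_def by auto
  have P: "finite P" "card P = m ^ k" unfolding P_def
    using finite_lists_length_eq[of "{..<m}" k] card_lists_length_eq[of "{..<m}" k] by simp_all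
  moreover have "k < n" using assms(2) by linarith
  then have "P \<noteq> {}" using profile by fastforce
  ultimately obtain ws where ws: "ws \<in> P" "card {k..<n} \<le> card (profile -` {ws} \<inter> {k..<n}) * card P"
    using pigeonhole_card[OF profile finite_atLeastLessThan] by blast
  let ?F = "profile -` {ws} \<inter> {k..<n}"
  have "(k - 1) * card P < n - k" using assms(2) P(2) by simp
  then have "k - 1 < card ?F"
    using ws(2) mult_le_mono1[of "card ?F" "k - 1" "card P"] card_atLeastLessThan[of k n] by linarith
  then have "k \<le> card ?F" by linarith
  then obtain T where T: "T \<subseteq> ?F" "card T = k" by (meson obtain_subset_with_card_n)
  moreover have "col {x, h} = ws ! h" if "x \<in> T" "h < k" for x h
    using T(1) that unfolding profile_def by auto
  ultimately show ?thesis using that by blast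
qed

lemma crx_split_graph_ge:
  assumes "2 \<le> k" "2 * k \<le> n" "(k - 1) * c ^ k < n - k"
  shows "c \<le> crx k {..<n} (split_graph k n)"
proof (rule le_crx[OF simple_graph_finite_edges[OF simple_graph_split_graph]
      k_cyclic_split_graph[OF assms(1,2)]])
  fix m col assume col: "colouring (split_graph k n) m col"
    "rainbow_cycle_colouring k {..<n} (split_graph k n) col"
  show "c \<le> m"
  proof (rule ccontr)
    assume "\<not> c \<le> m"
    then have "(k - 1) * m ^ k \<le> (k - 1) * c ^ k" by (simp add: power_mono)
    then have "(k - 1) * m ^ k < n - k" using assms(3) by linarith
    then obtain T ws where T: "T \<subseteq> {k..<n}" "card T = k"
      and profile: "\<And>x h. x \<in> T \<Longrightarrow> h < k \<Longrightarrow> col {x, h} = ws ! h"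
      using split_graph_common_profile[OF col(1)] by blast
    have "T \<subseteq> {..<n}" using T(1) by auto
    then obtain vs where vs: "is_cycle (split_graph k n) vs" "T \<subseteq> set vs" "rainbow col (cycle_edges vs)"
      using col(2) T(2) unfolding rainbow_cycle_colouring_def by blast
    have "1 \<le> k" using assms(1) by simp
    from split_graph_equal_profiles_no_rainbow_cycle[OF vs(1,2) T this, of col "(!) ws"] profile vs(3)
    show False by blast
  qed
qed

lemma crx_eq_rx_plus_constant:
  assumes "1 \<le> k"
  shows "\<exists>(V :: nat set) E. k_cyclic_graph k V E \<and> N \<le> card V
    \<and> crx k V E = rx k V E + (if k = 1 then 3 else if k \<le> 3 then 2 else 1)"
proof -
  consider "k = 1" | "k = 2" | "k = 3" | "4 \<le> k" using assms by linarith
  then show ?thesis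
  proof cases
    case 1
    then show ?thesis using k_cyclic_graph_triangle_split_graph[of "N + 3"] crx1_split_graph[of "N + 3"]
      by (intro exI[of _ "{..<N + 3}"] exI[of _ "split_graph 2 (N + 3)"]) (simp add: rx_def)
  next
    case 2
    then show ?thesis using k_cyclic_graph_cocktail_party[of "N + 2"] crx2_cocktail_party[of "N + 2"]
      rx2_cocktail_party[of "N + 2"]
      by (intro exI[of _ "{..<2 * (N + 2)}"] exI[of _ "cocktail_party (N + 2)"]) simp
  next
    case 3
    then show ?thesis using k_cyclic_graph_cycle_graph[of "N + 6" 3] crx_cycle_graph[of "N + 6" 3]
      rx3_cycle_graph[of "N + 6"]
      by (intro exI[of _ "{..<N + 6}"] exI[of _ "cycle_graph (N + 6)"]) simp
  next
    case 4
    then show ?thesis using k_cyclic_graph_cycle_graph[of "N + k" k] crx_cycle_graph[of "N + k" k]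
      rx_cycle_graph[of k "N + k"]
      by (intro exI[of _ "{..<N + k}"] exI[of _ "cycle_graph (N + k)"]) simp
  qed
qed

lemma crx_unbounded_with_rx_bounded:
  assumes "1 \<le> k" "1 \<le> c"
  shows "\<exists>(V :: nat set) E. k_cyclic_graph k V E \<and> rx k V E \<le> k ^ 2 - 1 \<and> c \<le> crx k V E"
proof -
  consider "k = 1" | "2 \<le> k" using assms by linarith
  then show ?thesis
  proof cases
    case 1
    then show ?thesis using k_cyclic_graph_cycle_graph[of "c + 3" 1] crx_cycle_graph[of "c + 3" 1]
      by (intro exI[of _ "{..<c + 3}"] exI[of _ "cycle_graph (c + 3)"]) (simp add: rx_def)
  next
    case 2
    define n where "n = 2 * k + (k - 1) * c ^ k"
    have "2 * k \<le> n" "(k - 1) * c ^ k < n - k" using 2 unfolding n_def by simp_all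
    moreover have "2 * k \<le> k ^ 2" using mult_le_mono1[OF 2, of k] by (simp add: power2_eq_square)
    then have "2 * k - 1 \<le> k ^ 2 - 1" by simp
    ultimately show ?thesis
      using 2 k_cyclic_graph_split_graph[of k n] rx_split_graph_le[of k n] crx_split_graph_ge[of k n c]
      by (intro exI[of _ "{..<n}"] exI[of _ "split_graph k n"]) auto
  qed
qed

theorem theorem2p7:
  fixes k :: nat
  assumes "k \<ge> 1"
  shows "(\<forall>N. \<exists>(V :: nat set) E. simple_graph V E \<and> graph_connected V E \<and> k_cyclic k V E
            \<and> k \<le> card V \<and> N \<le> card V
            \<and> crx k V E = rx k V E + (if k = 1 then 3 else if k \<le> 3 then 2 else 1))
       \<and> (\<forall>c::nat. c \<ge> 1 \<longrightarrow> (\<exists>(V :: nat set) E. simple_graph V E \<and> graph_connected V E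
            \<and> k_cyclic k V E \<and> k \<le> card V
            \<and> rx k V E \<le> k ^ 2 - 1 \<and> crx k V E \<ge> c))"
  using crx_eq_rx_plus_constant[OF assms] crx_unbounded_with_rx_bounded[OF assms]
  unfolding k_cyclic_graph_def conj_assoc by blast

end
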